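(* Fix $d\ge1$ and let $y_1,y_2,\dots$ and $\beta$ be indeterminates. For every partition $\lambda$ of $n$ with $\ell(\lambda)\le d$ (set $\lambda_i=0$ for $i>\ell(\lambda)$), $$\sum_{T\in\operatorname{SIT}(\lambda)}\prod_{k=1}^{m(T)}\left(\left[\prod_{i=1}^d\frac{1+\beta\,y_{\nu_i(T_{<k})+d-i+1}}{1+\beta\,y_{\lambda_i+d-i+1}}\right]-1\right)^{-1}=\frac{1}{\beta^n}\prod_{i=1}^d\big(1+\beta\,y_{\lambda_i+d-i+1}\big)^{\lambda_i}\prod_{(i,j)\in\lambda}\frac{1}{y_{d+j-\lambda'_j}-y_{\lambda_i+d-i+1}}.$$
   Context: Partitions are identified with Young diagrams $\{(i,j):1\le j\le\lambda_i\}$ (English convention); $\lambda'$ is the conjugate partition. A standard increasing tableau of shape $\lambda$ is a filling $T$ of the cells of $\lambda$ by positive integers, strictly increasing along rows and down columns, whose set of entries is $\{1,\dots,m\}$ for some $m=m(T)$; $\operatorname{SIT}(\lambda)$ is their set. For $k\ge1$, $\nu(T_{<k})$ is the partition formed by the cells with entry $<k$, and $\nu_i(T_{<k})$ its $i$-th part (0 beyond its length). The identity is one of rational functions in $\beta,y_1,y_2,\dots$. *)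

theory Defs
  imports Main
begin

definition is_partition :: "nat list \<Rightarrow> bool" where
  "is_partition lam \<longleftrightarrow> sorted_wrt (\<ge>) lam \<and> 0 \<notin> set lam"

definition part :: "nat list \<Rightarrow> nat \<Rightarrow> nat" where
  "part lam i = (if 1 \<le> i \<and> i \<le> length lam then lam ! (i - 1) else 0)"

definition young :: "nat list \<Rightarrow> (nat \<times> nat) set" where
  "young lam = {(i, j). 1 \<le> i \<and> 1 \<le> j \<and> j \<le> part lam i}"

definition conj_part :: "nat list \<Rightarrow> nat \<Rightarrow> nat" where
  "conj_part lam j = card {i \<in> {1..length lam}. j \<le> part lam i}"

definition sit :: "nat list \<Rightarrow> ((nat \<times> nat) \<Rightarrow> nat) set" where
  "sit lam = {T. (\<forall>c. c \<notin> young lam \<longrightarrow> T c = 0)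
     \<and> (\<forall>i j j'. (i, j) \<in> young lam \<and> (i, j') \<in> young lam \<and> j < j' \<longrightarrow> T (i, j) < T (i, j'))
     \<and> (\<forall>i i' j. (i, j) \<in> young lam \<and> (i', j) \<in> young lam \<and> i < i' \<longrightarrow> T (i, j) < T (i', j))
     \<and> (\<exists>m. T ` young lam = {1..m})}"

text \<open>m(T): the largest entry (the entry set is {1..m(T)}).\<close>
definition sit_max :: "nat list \<Rightarrow> ((nat \<times> nat) \<Rightarrow> nat) \<Rightarrow> nat" where
  "sit_max lam T = card (T ` young lam)"

text \<open>nu_i(T_{<k}): the i-th part of the partition formed by cells with entry < k.\<close>
definition nu :: "nat list \<Rightarrow> ((nat \<times> nat) \<Rightarrow> nat) \<Rightarrow> nat \<Rightarrow> nat \<Rightarrow> nat" where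
  "nu lam T k i = card {j. (i, j) \<in> young lam \<and> T (i, j) < k}"

end

theory Submission
  imports
    Defs
    "HOL-Computational_Algebra.Polynomial"
    "Jordan_Normal_Form.Determinant"
    "Jordan_Normal_Form.Column_Operations"
begin

(* Write A t = 1 + beta * y t. For a shape mu inside lambda let G(mu) be the same sum over
   standard increasing tableaux of the skew shape lambda/mu. Removing the cells with entry 1
   gives G(mu) = F(mu) * (sum of G(mu + S) over nonempty sets S of addable rows), where F(mu) is
   the factor of the theorem. With a_r the values of A at the particles lambda_i + d - i + 1 of
   lambda, the d x d determinant D(mu) with entries a_r^(d-1-c) * prod_{t < p_c} (A t / a_r - 1),
   p_c the particles of mu, satisfies the same recursion, because splitting its columns is
   multilinear. Hence G(mu) * D(lambda) = D(mu). At mu = 0 the determinant is of Vandermonde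
   type, at mu = lambda it is triangular, and the particles and holes d + j - lambda'_j together
   fill {1..lambda_1 + d}, which turns the quotient into the product formula. This needs A to be
   injective on {1..lambda_1 + d}; in general one perturbs A t to A t + x t and specialises the
   resulting identity of rational functions in x at x = 0. *)

section \<open>Rational functions regular at the origin\<close>

definition rational_at_0 :: "('a::field \<Rightarrow> 'a) \<Rightarrow> bool" where
  "rational_at_0 f \<longleftrightarrow>
     (\<exists>p q. poly q 0 \<noteq> 0 \<and> (\<forall>x. poly q x \<noteq> 0 \<longrightarrow> f x = poly p x / poly q x))"

lemma rational_at_0I:
  assumes "poly q 0 \<noteq> 0" "\<And>x. poly q x \<noteq> 0 \<Longrightarrow> f x = poly p x / poly q x"
  shows "rational_at_0 f"
  using assms unfolding rational_at_0_def by blast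

lemma rational_at_0_poly: "rational_at_0 (\<lambda>x. poly p x)"
  by (rule rational_at_0I[of 1]) auto

lemma rational_at_0_const: "rational_at_0 (\<lambda>x. c)"
  using rational_at_0_poly[of "[:c:]"] by simp

lemma rational_at_0_affine: "rational_at_0 (\<lambda>x. c + x * e)"
  using rational_at_0_poly[of "[:c, e:]"] by (simp add: algebra_simps)

lemma rational_at_0_add:
  assumes "rational_at_0 f" "rational_at_0 g"
  shows "rational_at_0 (\<lambda>x. f x + g x)"
proof -
  obtain q p where "poly q 0 \<noteq> 0" "\<And>x. poly q x \<noteq> 0 \<Longrightarrow> f x = poly p x / poly q x"
    using assms(1) unfolding rational_at_0_def by blast
  moreover obtain q' p' where "poly q' 0 \<noteq> 0" "\<And>x. poly q' x \<noteq> 0 \<Longrightarrow> g x = poly p' x / poly q' x"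
    using assms(2) unfolding rational_at_0_def by blast
  ultimately show ?thesis
    by (intro rational_at_0I[of "q * q'" _ "p * q' + p' * q"]) (auto simp: field_simps)
qed

lemma rational_at_0_mult:
  assumes "rational_at_0 f" "rational_at_0 g"
  shows "rational_at_0 (\<lambda>x. f x * g x)"
proof -
  obtain q p where "poly q 0 \<noteq> 0" "\<And>x. poly q x \<noteq> 0 \<Longrightarrow> f x = poly p x / poly q x"
    using assms(1) unfolding rational_at_0_def by blast
  moreover obtain q' p' where "poly q' 0 \<noteq> 0" "\<And>x. poly q' x \<noteq> 0 \<Longrightarrow> g x = poly p' x / poly q' x"
    using assms(2) unfolding rational_at_0_def by blast
  ultimately show ?thesis
    by (intro rational_at_0I[of "q * q'" _ "p * p'"]) auto
qed

lemma rational_at_0_diff: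
  assumes "rational_at_0 f" "rational_at_0 g"
  shows "rational_at_0 (\<lambda>x. f x - g x)"
  using rational_at_0_add[OF assms(1) rational_at_0_mult[OF rational_at_0_const assms(2)], of "-1"]
  by simp

lemma rational_at_0_inverse:
  assumes "rational_at_0 f" "f 0 \<noteq> 0"
  shows "rational_at_0 (\<lambda>x. 1 / f x)"
proof -
  obtain q p where q: "poly q 0 \<noteq> 0" "\<And>x. poly q x \<noteq> 0 \<Longrightarrow> f x = poly p x / poly q x"
    using assms(1) unfolding rational_at_0_def by blast
  with assms(2) have "poly p 0 \<noteq> 0" by auto
  with q show ?thesis
    by (intro rational_at_0I[of "p * q" _ "q * q"]) auto
qed

lemma rational_at_0_divide:
  assumes "rational_at_0 f" "rational_at_0 g" "g 0 \<noteq> 0"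
  shows "rational_at_0 (\<lambda>x. f x / g x)"
  using rational_at_0_mult[OF assms(1) rational_at_0_inverse[OF assms(2,3)]]
  by (simp add: divide_inverse)

lemma rational_at_0_sum:
  "(\<And>i. i \<in> I \<Longrightarrow> rational_at_0 (f i)) \<Longrightarrow> rational_at_0 (\<lambda>x. \<Sum>i\<in>I. f i x)"
  by (induction I rule: infinite_finite_induct) (auto simp: rational_at_0_const rational_at_0_add)

lemma rational_at_0_prod:
  "(\<And>i. i \<in> I \<Longrightarrow> rational_at_0 (f i)) \<Longrightarrow> rational_at_0 (\<lambda>x. \<Prod>i\<in>I. f i x)"
  by (induction I rule: infinite_finite_induct) (auto simp: rational_at_0_const rational_at_0_mult)

lemma rational_at_0_power: "rational_at_0 f \<Longrightarrow> rational_at_0 (\<lambda>x. f x ^ n)"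
  by (induction n) (auto simp: rational_at_0_const rational_at_0_mult)

lemma rational_at_0_finite_zeros:
  assumes "rational_at_0 f" "f 0 \<noteq> 0"
  shows "finite {x. f x = 0}"
proof -
  obtain q p where q: "poly q 0 \<noteq> 0" "\<And>x. poly q x \<noteq> 0 \<Longrightarrow> f x = poly p x / poly q x"
    using assms(1) unfolding rational_at_0_def by blast
  with assms(2) have "p \<noteq> 0" "q \<noteq> 0" by auto
  then have "finite ({x. poly p x = 0} \<union> {x. poly q x = 0})"
    by (simp add: poly_roots_finite)
  moreover have "{x. f x = 0} \<subseteq> {x. poly p x = 0} \<union> {x. poly q x = 0}"
    using q by auto
  ultimately show ?thesis
    by (rule finite_subset[rotated])
qed

lemma rational_at_0_cofinite_eq:
  fixes f g :: "'a::field_char_0 \<Rightarrow> 'a"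
  assumes "rational_at_0 f" "rational_at_0 g" "finite {x. f x \<noteq> g x}"
  shows "f 0 = g 0"
proof -
  obtain q p where q: "poly q 0 \<noteq> 0" "\<And>x. poly q x \<noteq> 0 \<Longrightarrow> f x = poly p x / poly q x"
    using assms(1) unfolding rational_at_0_def by blast
  obtain q' p' where q': "poly q' 0 \<noteq> 0" "\<And>x. poly q' x \<noteq> 0 \<Longrightarrow> g x = poly p' x / poly q' x"
    using assms(2) unfolding rational_at_0_def by blast
  define P where "P = p * q' - p' * q"
  have "{x. poly P x \<noteq> 0} \<subseteq> {x. f x \<noteq> g x} \<union> {x. poly q x = 0} \<union> {x. poly q' x = 0}"
    using q q' by (auto simp: P_def frac_eq_eq)
  moreover have "q \<noteq> 0" "q' \<noteq> 0" using q(1) q'(1) by auto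
  then have "finite ({x. f x \<noteq> g x} \<union> {x. poly q x = 0} \<union> {x. poly q' x = 0})"
    using assms(3) by (simp add: poly_roots_finite)
  ultimately have finite_nonroots: "finite {x. poly P x \<noteq> 0}"
    by (rule finite_subset)
  have "P = 0"
  proof (rule ccontr)
    assume "P \<noteq> 0"
    then have "finite ({x. poly P x = 0} \<union> {x. poly P x \<noteq> 0})"
      using finite_nonroots by (simp add: poly_roots_finite)
    moreover have "{x. poly P x = 0} \<union> {x. poly P x \<noteq> 0} = UNIV" by auto
    ultimately show False
      by (metis infinite_UNIV_char_0)
  qed
  then show ?thesis
    using q q' by (simp add: P_def frac_eq_eq flip: poly_mult)
qed

section \<open>Partitions, conjugates, particles and holes\<close>

lemma descending_below:
  fixes f :: "nat \<Rightarrow> nat"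
  assumes step: "\<And>c. Suc c < d \<Longrightarrow> f (Suc c) < f c" and j: "j < d"
  shows descending_below_less: "i < j \<Longrightarrow> f j < f i"
    and descending_below_le: "i \<le> j \<Longrightarrow> f j \<le> f i"
proof -
  show less: "i < j \<Longrightarrow> f j < f i" for i
    using j
  proof (induction j)
    case (Suc j)
    then show ?case using step[of j] by (cases "i = j") auto
  qed simp
  show "i \<le> j \<Longrightarrow> f j \<le> f i"
    using less[of i] by (cases "i = j") auto
qed

lemma part_antimono:
  assumes "is_partition lam" "1 \<le> i" "i \<le> i'"
  shows "part lam i' \<le> part lam i"
proof (cases "i' \<le> length lam")
  case True
  have sorted: "sorted_wrt (\<ge>) lam" using assms(1) by (simp add: is_partition_def)
  show ?thesis
  proof (cases "i = i'")
    case False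
    then show ?thesis
      using sorted_wrt_nth_less[OF sorted, of "i - 1" "i' - 1"] assms True
      by (simp add: Defs.part_def)
  qed simp
qed (simp add: Defs.part_def)

lemma part_pos_iff:
  assumes "is_partition lam"
  shows "0 < part lam i \<longleftrightarrow> 1 \<le> i \<and> i \<le> length lam"
proof -
  have "0 < lam ! (i - 1)" if "1 \<le> i" "i \<le> length lam"
  proof -
    have "lam ! (i - 1) \<in> set lam" by (rule nth_mem) (use that in linarith)
    then show ?thesis using assms by (metis is_partition_def gr0I)
  qed
  then show ?thesis by (auto simp: Defs.part_def)
qed

lemma young_iff: "(i, j) \<in> young lam \<longleftrightarrow> 1 \<le> i \<and> 1 \<le> j \<and> j \<le> part lam i"
  by (simp add: young_def)

lemma young_Sigma: "young lam = Sigma {1..length lam} (\<lambda>i. {1..part lam i})"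
  by (auto simp: young_def Defs.part_def split: if_splits)

lemma young_Sigma_upto:
  assumes "is_partition lam" "length lam \<le> d"
  shows "young lam = Sigma {1..d} (\<lambda>i. {1..part lam i})"
proof (rule Set.set_eqI)
  fix c :: "nat \<times> nat"
  show "c \<in> young lam \<longleftrightarrow> c \<in> Sigma {1..d} (\<lambda>i. {1..part lam i})"
    using part_pos_iff[OF assms(1), of "fst c"] assms(2) by (cases c) (auto simp: young_iff)
qed

lemma finite_young: "finite (young lam)"
  by (simp add: young_Sigma)

lemma card_young: "card (young lam) = sum_list lam"
proof -
  have "card (young lam) = (\<Sum>i=1..length lam. part lam i)"
    unfolding young_Sigma by (simp add: card_SigmaI)
  also have "\<dots> = (\<Sum>c<length lam. lam ! c)"
    by (simp add: sum.atLeast1_atMost_eq Defs.part_def)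
  also have "\<dots> = sum_list lam"
    by (simp add: sum_list_sum_nth atLeast0LessThan)
  finally show ?thesis .
qed

lemma le_conj_part_iff:
  assumes lam: "is_partition lam" and "1 \<le> i" "1 \<le> j"
  shows "i \<le> conj_part lam j \<longleftrightarrow> j \<le> part lam i"
proof
  assume "j \<le> part lam i"
  then have "i \<le> length lam" using part_pos_iff[OF lam, of i] assms(3) by simp
  with \<open>j \<le> part lam i\<close> have "{1..i} \<subseteq> {i' \<in> {1..length lam}. j \<le> part lam i'}"
    using part_antimono[OF lam] by fastforce
  then have "card {1..i} \<le> conj_part lam j"
    unfolding conj_part_def by (rule card_mono[rotated]) simp
  then show "i \<le> conj_part lam j" by simp
next
  assume i: "i \<le> conj_part lam j"
  show "j \<le> part lam i"
  proof (rule ccontr)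
    assume "\<not> j \<le> part lam i"
    then have "i' < i" if "j \<le> part lam i'" for i'
      using part_antimono[OF lam \<open>1 \<le> i\<close>, of i'] that by (meson le_trans not_le)
    then have "{i' \<in> {1..length lam}. j \<le> part lam i'} \<subseteq> {1..i - 1}" by fastforce
    then have "conj_part lam j \<le> card {1..i - 1}"
      unfolding conj_part_def by (rule card_mono[rotated]) simp
    with i \<open>1 \<le> i\<close> show False by simp
  qed
qed

lemma conj_part_le_length: "conj_part lam j \<le> length lam"
proof -
  have "conj_part lam j \<le> card {1..length lam}"
    unfolding conj_part_def by (rule card_mono) auto
  then show ?thesis by simp
qed

lemma conj_part_antimono: "j \<le> j' \<Longrightarrow> conj_part lam j' \<le> conj_part lam j"
  unfolding conj_part_def by (rule card_mono) auto

text \<open>Rows are counted from \<open>c = 0\<close> here: \<open>particle d \<mu> c\<close> is the position \<open>\<mu>\<^sub>i + d - i + 1\<close>,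
  \<open>i = c + 1\<close>, of a particle in the Maya diagram of \<open>\<mu>\<close>. The holes \<open>d + j - \<lambda>'\<^sub>j\<close>, the indices in
  the denominator of the theorem, run through the complementary positions.\<close>

definition particle :: "nat \<Rightarrow> (nat \<Rightarrow> nat) \<Rightarrow> nat \<Rightarrow> nat" where
  "particle d \<mu> c = \<mu> (Suc c) + d - c"

definition hole :: "nat list \<Rightarrow> nat \<Rightarrow> nat \<Rightarrow> nat" where
  "hole lam d j = d + j - conj_part lam j"

lemma particle_part_descending:
  assumes "is_partition lam" "Suc c < d"
  shows "particle d (part lam) (Suc c) < particle d (part lam) c"
  using part_antimono[OF assms(1), of "Suc c" "Suc (Suc c)"] assms(2)
  by (simp add: particle_def)

lemma particle_part_range:
  assumes "is_partition lam" "r < d"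
  shows "1 \<le> particle d (part lam) r" "particle d (part lam) r \<le> part lam 1 + d"
  using part_antimono[OF assms(1), of 1 "Suc r"] assms(2) by (auto simp: particle_def)

lemma particle_part_less:
  assumes "is_partition lam" "r < r'" "r' < d"
  shows "particle d (part lam) r' < particle d (part lam) r"
  using descending_below_less[where f = "particle d (part lam)",
      OF particle_part_descending[OF assms(1)] assms(3,2)] .

lemma hole_less_particle:
  assumes lam: "is_partition lam" and len: "length lam \<le> d"
    and j: "1 \<le> j" "j \<le> part lam (Suc r)" and r: "r < d"
  shows "hole lam d j < particle d (part lam) r" "1 \<le> hole lam d j"
proof -
  have "Suc r \<le> conj_part lam j" using le_conj_part_iff[OF lam _ j(1)] j(2) by simp
  moreover have "conj_part lam j \<le> d" using conj_part_le_length[of lam j] len by simp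
  ultimately show "hole lam d j < particle d (part lam) r" "1 \<le> hole lam d j"
    using j r by (auto simp: hole_def particle_def)
qed

lemma hole_neq_particle:
  assumes lam: "is_partition lam" and len: "length lam \<le> d" and j: "1 \<le> j" and r: "r < d"
  shows "hole lam d j \<noteq> particle d (part lam) r"
proof (cases "j \<le> part lam (Suc r)")
  case True
  then show ?thesis using hole_less_particle[OF lam len j True r] by simp
next
  case False
  then have "conj_part lam j < Suc r" using le_conj_part_iff[OF lam _ j, of "Suc r"] by simp
  then show ?thesis using False r by (simp add: hole_def particle_def)
qed

lemma hole_strict_mono:
  assumes "length lam \<le> d"
  shows "strict_mono (hole lam d)"
proof (rule strict_monoI)
  fix j j' :: nat assume "j < j'"
  moreover have "conj_part lam j' \<le> conj_part lam j" "conj_part lam j \<le> d"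
    using conj_part_antimono[of j j' lam] \<open>j < j'\<close> conj_part_le_length[of lam j] assms by auto
  ultimately show "hole lam d j < hole lam d j'" by (simp add: hole_def)
qed

lemma inj_on_particle_part:
  assumes "is_partition lam"
  shows "inj_on (particle d (part lam)) {r<..<d}"
  by (rule inj_onI) (metis greaterThanLessThan_iff nat_neq_iff particle_part_less[OF assms])

lemma below_particle_eq:
  assumes lam: "is_partition lam" and len: "length lam \<le> d" and r: "r < d"
  shows "{1..<particle d (part lam) r}
           = particle d (part lam) ` {r<..<d} \<union> hole lam d ` {1..part lam (Suc r)}"
proof (rule card_subset_eq[symmetric])
  show sub: "particle d (part lam) ` {r<..<d} \<union> hole lam d ` {1..part lam (Suc r)}
               \<subseteq> {1..<particle d (part lam) r}"
    using particle_part_less[OF lam, of r _ d] particle_part_range(1)[OF lam, of _ d]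
      hole_less_particle[OF lam len _ _ r] by fastforce
  have "card (particle d (part lam) ` {r<..<d} \<union> hole lam d ` {1..part lam (Suc r)})
          = card (particle d (part lam) ` {r<..<d}) + card (hole lam d ` {1..part lam (Suc r)})"
    using hole_neq_particle[OF lam len] by (intro card_Un_disjoint) fastforce+
  also have "\<dots> = (d - Suc r) + part lam (Suc r)"
    using card_image[OF inj_on_particle_part[OF lam]]
      card_image[OF strict_mono_imp_inj_on[OF hole_strict_mono[OF len]]] by simp
  also have "\<dots> = card {1..<particle d (part lam) r}" using r by (simp add: particle_def)
  finally show "card (particle d (part lam) ` {r<..<d} \<union> hole lam d ` {1..part lam (Suc r)})
                  = card {1..<particle d (part lam) r}" .
qed simp

section \<open>Standard increasing tableaux of skew shape\<close>

text \<open>Shapes \<open>\<mu> \<subseteq> \<lambda>\<close> are functions on row indices, with row 0 forced to be empty;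
  \<open>sit_skew lam \<mu>\<close> consists of the standard increasing tableaux of skew shape \<open>\<lambda>/\<mu>\<close>.\<close>

definition subshape :: "nat list \<Rightarrow> (nat \<Rightarrow> nat) \<Rightarrow> bool" where
  "subshape lam \<mu> \<longleftrightarrow> (\<forall>i. \<mu> i \<le> part lam i) \<and> (\<forall>i. 1 \<le> i \<longrightarrow> \<mu> (Suc i) \<le> \<mu> i)"

definition skew_cells :: "nat list \<Rightarrow> (nat \<Rightarrow> nat) \<Rightarrow> (nat \<times> nat) set" where
  "skew_cells lam \<mu> = {(i, j). (i, j) \<in> young lam \<and> \<mu> i < j}"

definition sit_skew :: "nat list \<Rightarrow> (nat \<Rightarrow> nat) \<Rightarrow> ((nat \<times> nat) \<Rightarrow> nat) set" where
  "sit_skew lam \<mu> = {T. (\<forall>c. c \<notin> skew_cells lam \<mu> \<longrightarrow> T c = 0)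
     \<and> (\<forall>i j j'. (i, j) \<in> skew_cells lam \<mu> \<and> (i, j') \<in> skew_cells lam \<mu> \<and> j < j'
          \<longrightarrow> T (i, j) < T (i, j'))
     \<and> (\<forall>i i' j. (i, j) \<in> skew_cells lam \<mu> \<and> (i', j) \<in> skew_cells lam \<mu> \<and> i < i'
          \<longrightarrow> T (i, j) < T (i', j))
     \<and> (\<exists>m. T ` skew_cells lam \<mu> = {1..m})}"

definition sit_skew_max :: "nat list \<Rightarrow> (nat \<Rightarrow> nat) \<Rightarrow> ((nat \<times> nat) \<Rightarrow> nat) \<Rightarrow> nat" where
  "sit_skew_max lam \<mu> T = card (T ` skew_cells lam \<mu>)"

definition skew_sum :: "nat list \<Rightarrow> ((nat \<Rightarrow> nat) \<Rightarrow> 'a::comm_ring_1) \<Rightarrow> (nat \<Rightarrow> nat) \<Rightarrow> 'a" where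
  "skew_sum lam F \<mu> = (\<Sum>T\<in>sit_skew lam \<mu>. \<Prod>k=1..sit_skew_max lam \<mu> T. F (nu lam T k))"

text \<open>Rows \<open>i\<close> whose first cell \<open>(i, \<mu>\<^sub>i + 1)\<close> of \<open>\<lambda>/\<mu>\<close> is a corner, so that it can carry the
  entry 1.\<close>

definition addable :: "nat list \<Rightarrow> (nat \<Rightarrow> nat) \<Rightarrow> nat set" where
  "addable lam \<mu> = {i. 1 \<le> i \<and> \<mu> i < part lam i \<and> (i = 1 \<or> \<mu> i < \<mu> (i - 1))}"

definition bump :: "(nat \<Rightarrow> nat) \<Rightarrow> nat set \<Rightarrow> nat \<Rightarrow> nat" where
  "bump f S x = f x + (if x \<in> S then 1 else 0)"

definition bump_cells :: "(nat \<Rightarrow> nat) \<Rightarrow> nat set \<Rightarrow> (nat \<times> nat) set" where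
  "bump_cells \<mu> S = (\<lambda>i. (i, Suc (\<mu> i))) ` S"

definition sit_push ::
    "nat list \<Rightarrow> (nat \<Rightarrow> nat) \<Rightarrow> nat set \<Rightarrow> ((nat \<times> nat) \<Rightarrow> nat) \<Rightarrow> (nat \<times> nat) \<Rightarrow> nat" where
  "sit_push lam \<mu> S T c =
     (if c \<in> bump_cells \<mu> S then 1 else if c \<in> skew_cells lam (bump \<mu> S) then Suc (T c) else 0)"

definition one_rows :: "nat list \<Rightarrow> (nat \<Rightarrow> nat) \<Rightarrow> ((nat \<times> nat) \<Rightarrow> nat) \<Rightarrow> nat set" where
  "one_rows lam \<mu> T = {i. (i, Suc (\<mu> i)) \<in> skew_cells lam \<mu> \<and> T (i, Suc (\<mu> i)) = 1}"

definition sit_pop :: "nat list \<Rightarrow> (nat \<Rightarrow> nat) \<Rightarrow> ((nat \<times> nat) \<Rightarrow> nat) \<Rightarrow> (nat \<times> nat) \<Rightarrow> nat" where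
  "sit_pop lam \<mu> T c = (if c \<in> skew_cells lam (bump \<mu> (one_rows lam \<mu> T)) then T c - 1 else 0)"

lemma skew_cells_iff:
  "(i, j) \<in> skew_cells lam \<mu> \<longleftrightarrow> 1 \<le> i \<and> 1 \<le> j \<and> j \<le> part lam i \<and> \<mu> i < j"
  by (simp add: skew_cells_def young_def)

lemma skew_cells_zero: "skew_cells lam (\<lambda>_. 0) = young lam"
  by (auto simp: skew_cells_def young_def)

lemma finite_skew_cells: "finite (skew_cells lam \<mu>)"
  using finite_young[of lam] by (rule finite_subset[rotated]) (auto simp: skew_cells_def)

lemma sit_skew_zero: "sit_skew lam (\<lambda>_. 0) = sit lam"
  by (simp add: sit_skew_def sit_def skew_cells_zero)

lemma sit_skew_max_zero: "sit_skew_max lam (\<lambda>_. 0) = sit_max lam"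
  by (simp add: sit_skew_max_def sit_max_def skew_cells_zero fun_eq_iff)

lemma sit_skewD:
  assumes "T \<in> sit_skew lam \<mu>"
  shows sit_skew_outside: "c \<notin> skew_cells lam \<mu> \<Longrightarrow> T c = 0"
    and sit_skew_row: "(i, j) \<in> skew_cells lam \<mu> \<Longrightarrow> (i, j') \<in> skew_cells lam \<mu> \<Longrightarrow> j < j'
             \<Longrightarrow> T (i, j) < T (i, j')"
    and sit_skew_col: "(i, j) \<in> skew_cells lam \<mu> \<Longrightarrow> (i', j) \<in> skew_cells lam \<mu> \<Longrightarrow> i < i'
             \<Longrightarrow> T (i, j) < T (i', j)"
    and sit_skew_image: "\<exists>m. T ` skew_cells lam \<mu> = {1..m}"
proof -
  show "c \<notin> skew_cells lam \<mu> \<Longrightarrow> T c = 0"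
    using assms by (cases c) (simp add: sit_skew_def)
qed (use assms in \<open>simp_all add: sit_skew_def\<close>)

lemma sit_skewI:
  assumes "\<And>c. c \<notin> skew_cells lam \<mu> \<Longrightarrow> T c = 0"
    and "\<And>i j j'. (i, j) \<in> skew_cells lam \<mu> \<Longrightarrow> (i, j') \<in> skew_cells lam \<mu> \<Longrightarrow> j < j'
           \<Longrightarrow> T (i, j) < T (i, j')"
    and "\<And>i i' j. (i, j) \<in> skew_cells lam \<mu> \<Longrightarrow> (i', j) \<in> skew_cells lam \<mu> \<Longrightarrow> i < i'
           \<Longrightarrow> T (i, j) < T (i', j)"
    and "T ` skew_cells lam \<mu> = {1..m}"
  shows "T \<in> sit_skew lam \<mu>"
  using assms unfolding sit_skew_def by blast

lemma sit_skew_max_eq: "T ` skew_cells lam \<mu> = {1..m} \<Longrightarrow> sit_skew_max lam \<mu> T = m"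
  by (simp add: sit_skew_max_def)

lemma sit_skew_pos:
  assumes "T \<in> sit_skew lam \<mu>" "c \<in> skew_cells lam \<mu>"
  shows "1 \<le> T c"
  using sit_skew_image[OF assms(1)] assms(2) by fastforce

lemma sit_skew_le_card:
  assumes "T \<in> sit_skew lam \<mu>"
  shows "T c \<le> card (skew_cells lam \<mu>)"
proof (cases "c \<in> skew_cells lam \<mu>")
  case True
  obtain m where m: "T ` skew_cells lam \<mu> = {1..m}" using sit_skew_image[OF assms] by blast
  then have "m \<le> card (skew_cells lam \<mu>)"
    using card_image_le[OF finite_skew_cells, of T lam \<mu>] by simp
  moreover have "T c \<le> m" using m True by fastforce
  ultimately show ?thesis by simp
qed (simp add: sit_skew_outside[OF assms])

lemma finite_sit_skew: "finite (sit_skew lam \<mu>)"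
proof (rule finite_subset)
  let ?Y = "skew_cells lam \<mu>"
  show "sit_skew lam \<mu> \<subseteq> {T. \<forall>c. (c \<in> ?Y \<longrightarrow> T c \<in> {0..card ?Y}) \<and> (c \<notin> ?Y \<longrightarrow> T c = 0)}"
    using sit_skew_le_card sit_skew_outside by fastforce
  show "finite {T. \<forall>c. (c \<in> ?Y \<longrightarrow> T c \<in> {0..card ?Y}) \<and> (c \<notin> ?Y \<longrightarrow> T c = 0)}"
    by (rule finite_set_of_finite_funs[OF finite_skew_cells]) simp
qed

lemma finite_sit: "finite (sit lam)"
  using finite_sit_skew[of lam "\<lambda>_. 0"] by (simp add: sit_skew_zero)

lemma subshape_antimono:
  assumes "subshape lam \<mu>" "1 \<le> i" "i \<le> i'"
  shows "\<mu> i' \<le> \<mu> i"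
  using assms(3)
proof (induction i' rule: dec_induct)
  case (step i')
  then show ?case using assms(1,2) by (auto simp: subshape_def intro: le_trans)
qed simp

lemma subshape_zero: "subshape lam (\<lambda>_. 0)"
  by (simp add: subshape_def)

lemma subshape_row_0: "subshape lam \<mu> \<Longrightarrow> \<mu> 0 = 0"
  unfolding subshape_def by (metis le_zero_eq Defs.part_def not_one_le_zero)

lemma addable_subset:
  assumes "is_partition lam"
  shows "addable lam \<mu> \<subseteq> {1..length lam}"
  using part_pos_iff[OF assms] by (fastforce simp: addable_def)

lemma finite_addable: "is_partition lam \<Longrightarrow> finite (addable lam \<mu>)"
  using addable_subset finite_subset by blast

lemma subshape_bump:
  assumes "subshape lam \<mu>" "S \<subseteq> addable lam \<mu>"
  shows "subshape lam (bump \<mu> S)"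
  unfolding subshape_def
proof (intro conjI allI impI)
  show "bump \<mu> S i \<le> part lam i" for i
    using assms by (auto simp: bump_def addable_def subshape_def Suc_le_eq)
  show "bump \<mu> S (Suc i) \<le> bump \<mu> S i" if "1 \<le> i" for i
    using assms that by (auto simp: bump_def addable_def subshape_def)
qed

lemma mem_bump_cells: "(i, j) \<in> bump_cells \<mu> S \<longleftrightarrow> i \<in> S \<and> j = Suc (\<mu> i)"
  by (auto simp: bump_cells_def)

lemma bump_cells_subset:
  assumes "S \<subseteq> addable lam \<mu>"
  shows "bump_cells \<mu> S \<subseteq> skew_cells lam \<mu>"
  using assms by (auto simp: bump_cells_def addable_def skew_cells_iff Suc_le_eq)

lemma skew_cells_bump:
  assumes "S \<subseteq> addable lam \<mu>"
  shows "skew_cells lam \<mu> = bump_cells \<mu> S \<union> skew_cells lam (bump \<mu> S)"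
    and "bump_cells \<mu> S \<inter> skew_cells lam (bump \<mu> S) = {}"
proof -
  have "skew_cells lam \<mu> \<subseteq> bump_cells \<mu> S \<union> skew_cells lam (bump \<mu> S)"
    by (auto simp: skew_cells_iff mem_bump_cells bump_def split: if_splits)
  moreover have "skew_cells lam (bump \<mu> S) \<subseteq> skew_cells lam \<mu>"
    by (auto simp: skew_cells_iff bump_def)
  ultimately show "skew_cells lam \<mu> = bump_cells \<mu> S \<union> skew_cells lam (bump \<mu> S)"
    using bump_cells_subset[OF assms] by blast
  show "bump_cells \<mu> S \<inter> skew_cells lam (bump \<mu> S) = {}"
    by (auto simp: bump_cells_def bump_def skew_cells_iff)
qed

lemma card_skew_cells_bump:
  assumes "S \<subseteq> addable lam \<mu>" "S \<noteq> {}"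
  shows "card (skew_cells lam (bump \<mu> S)) < card (skew_cells lam \<mu>)"
proof (rule psubset_card_mono[OF finite_skew_cells])
  have "bump_cells \<mu> S \<noteq> {}" using assms(2) by (simp add: bump_cells_def)
  then show "skew_cells lam (bump \<mu> S) \<subset> skew_cells lam \<mu>"
    using skew_cells_bump[OF assms(1)] by blast
qed

lemma bump_cells_minimal:
  assumes v: "subshape lam \<mu>" and S: "S \<subseteq> addable lam \<mu>"
    and c: "(i, j) \<in> skew_cells lam \<mu>" and c': "(i', j') \<in> bump_cells \<mu> S"
    and le: "i \<le> i'" "j \<le> j'"
  shows "i = i' \<and> j = j'"
proof -
  have i1: "1 \<le> i" and lt: "\<mu> i < j" using c by (auto simp: skew_cells_iff)
  have i': "i' \<in> addable lam \<mu>" and j': "j' = Suc (\<mu> i')"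
    using c' S by (auto simp: mem_bump_cells)
  have "\<mu> i' \<le> \<mu> i" using subshape_antimono[OF v i1 le(1)] .
  have "i = i'"
  proof (rule ccontr)
    assume "i \<noteq> i'"
    then have "\<mu> i' < \<mu> (i' - 1)" "\<mu> (i' - 1) \<le> \<mu> i"
      using i' i1 le(1) subshape_antimono[OF v i1, of "i' - 1"] by (auto simp: addable_def)
    then show False using lt le(2) j' by simp
  qed
  then show ?thesis using lt le(2) j' by simp
qed

text \<open>Removing the cells with entry 1 from a tableau of shape \<open>\<lambda>/\<mu>\<close> and lowering all other
  entries by one gives a tableau of shape \<open>\<lambda>/(\<mu> + S)\<close>, where \<open>S\<close> is a nonempty set of
  addable rows; \<open>sit_push\<close> inverts this.\<close>

lemma sit_push_in_sit_skew:
  assumes v: "subshape lam \<mu>" and S: "S \<subseteq> addable lam \<mu>" "S \<noteq> {}"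
    and T: "T \<in> sit_skew lam (bump \<mu> S)" and m: "T ` skew_cells lam (bump \<mu> S) = {1..m}"
  shows "sit_push lam \<mu> S T \<in> sit_skew lam \<mu>"
    and "sit_push lam \<mu> S T ` skew_cells lam \<mu> = {1..Suc m}"
proof -
  let ?Y = "skew_cells lam \<mu>" and ?Y' = "skew_cells lam (bump \<mu> S)"
    and ?C = "bump_cells \<mu> S" and ?P = "sit_push lam \<mu> S T"
  note dec = skew_cells_bump[OF S(1)]
  have PC: "c \<in> ?C \<Longrightarrow> ?P c = 1" for c by (simp add: sit_push_def)
  have PY: "c \<in> ?Y' \<Longrightarrow> ?P c = Suc (T c)" for c using dec(2) by (auto simp: sit_push_def)
  have "?P ` ?Y = ?P ` ?C \<union> ?P ` ?Y'" using dec(1) by auto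
  also have "?P ` ?C = {1}" using PC S(2) by (auto simp: bump_cells_def)
  also have "?P ` ?Y' = Suc ` (T ` ?Y')" using PY by (auto simp: image_iff)
  also have "{1} \<union> Suc ` (T ` ?Y') = {1..Suc m}"
    unfolding m by (auto simp: image_Suc_atLeastAtMost)
  finally show img: "?P ` ?Y = {1..Suc m}" .
  have increasing: "?P (i, j) < ?P (i', j')"
    if c: "(i, j) \<in> ?Y" "(i', j') \<in> ?Y" and le: "i \<le> i'" "j \<le> j'" "(i, j) \<noteq> (i', j')"
      and T_less: "(i, j) \<in> ?Y' \<Longrightarrow> (i', j') \<in> ?Y' \<Longrightarrow> T (i, j) < T (i', j')" for i j i' j'
  proof -
    have "(i', j') \<notin> ?C" using bump_cells_minimal[OF v S(1) c(1) _ le(1,2)] le(3) by blast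
    then have c': "(i', j') \<in> ?Y'" using c(2) dec(1) by blast
    show ?thesis
    proof (cases "(i, j) \<in> ?C")
      case True
      then show ?thesis using PC PY c' sit_skew_pos[OF T c'] by simp
    next
      case False
      then have "(i, j) \<in> ?Y'" using c(1) dec(1) by blast
      then show ?thesis using PY c' T_less by simp
    qed
  qed
  show "?P \<in> sit_skew lam \<mu>"
  proof (rule sit_skewI[OF _ _ _ img])
    show "?P c = 0" if "c \<notin> ?Y" for c using that dec(1) by (simp add: sit_push_def)
    show "?P (i, j) < ?P (i, j')" if "(i, j) \<in> ?Y" "(i, j') \<in> ?Y" "j < j'" for i j j'
      using increasing[of i j i j'] sit_skew_row[OF T, of i j j'] that by simp
    show "?P (i, j) < ?P (i', j)" if "(i, j) \<in> ?Y" "(i', j) \<in> ?Y" "i < i'" for i i' j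
      using increasing[of i j i' j] sit_skew_col[OF T, of i j i'] that by simp
  qed
qed

lemma sit_skew_eq_1:
  assumes T: "T \<in> sit_skew lam \<mu>" and c: "(i, j) \<in> skew_cells lam \<mu>" and "T (i, j) = 1"
  shows "j = Suc (\<mu> i)"
proof (rule ccontr)
  assume "j \<noteq> Suc (\<mu> i)"
  then have lt: "Suc (\<mu> i) < j" using c by (auto simp: skew_cells_iff)
  then have c': "(i, Suc (\<mu> i)) \<in> skew_cells lam \<mu>" using c by (auto simp: skew_cells_iff)
  show False
    using sit_skew_row[OF T c' c lt] sit_skew_pos[OF T c'] \<open>T (i, j) = 1\<close> by simp
qed

lemma bump_cells_one_rows:
  assumes "T \<in> sit_skew lam \<mu>"
  shows "bump_cells \<mu> (one_rows lam \<mu> T) = {c \<in> skew_cells lam \<mu>. T c = 1}"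
  using sit_skew_eq_1[OF assms] by (auto simp: bump_cells_def one_rows_def)

lemma one_rows_subset_addable:
  assumes lam: "is_partition lam" and v: "subshape lam \<mu>" and T: "T \<in> sit_skew lam \<mu>"
  shows "one_rows lam \<mu> T \<subseteq> addable lam \<mu>"
proof
  fix i assume "i \<in> one_rows lam \<mu> T"
  then have c: "(i, Suc (\<mu> i)) \<in> skew_cells lam \<mu>" and T1: "T (i, Suc (\<mu> i)) = 1"
    by (auto simp: one_rows_def)
  have i1: "1 \<le> i" and lt: "\<mu> i < part lam i" using c by (auto simp: skew_cells_iff Suc_le_eq)
  have "i = 1 \<or> \<mu> i < \<mu> (i - 1)"
  proof (rule ccontr)
    assume "\<not> (i = 1 \<or> \<mu> i < \<mu> (i - 1))"
    then have i2: "2 \<le> i" and "\<mu> (i - 1) \<le> \<mu> i" using i1 by auto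
    then have "\<mu> (i - 1) = \<mu> i" using subshape_antimono[OF v, of "i - 1" i] by simp
    moreover have "part lam i \<le> part lam (i - 1)" using part_antimono[OF lam, of "i - 1" i] i2 by simp
    ultimately have c': "(i - 1, Suc (\<mu> i)) \<in> skew_cells lam \<mu>" using c i2 by (auto simp: skew_cells_iff)
    show False
      using sit_skew_col[OF T c' c] sit_skew_pos[OF T c'] T1 i2 by simp
  qed
  then show "i \<in> addable lam \<mu>" using i1 lt by (simp add: addable_def)
qed

lemma one_rows_nonempty:
  assumes T: "T \<in> sit_skew lam \<mu>" and ne: "skew_cells lam \<mu> \<noteq> {}"
  shows "one_rows lam \<mu> T \<noteq> {}"
proof -
  obtain m where m: "T ` skew_cells lam \<mu> = {1..m}" using sit_skew_image[OF T] by blast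
  then have "1 \<in> T ` skew_cells lam \<mu>" using ne by fastforce
  then obtain c where "c \<in> skew_cells lam \<mu>" "T c = 1" by (metis imageE)
  then have "c \<in> bump_cells \<mu> (one_rows lam \<mu> T)" using bump_cells_one_rows[OF T] by blast
  then show ?thesis by (auto simp: bump_cells_def)
qed

lemma sit_pop_in_sit_skew:
  assumes lam: "is_partition lam" and v: "subshape lam \<mu>" and T: "T \<in> sit_skew lam \<mu>"
    and m: "T ` skew_cells lam \<mu> = {1..m}"
  defines "S \<equiv> one_rows lam \<mu> T"
  shows "sit_pop lam \<mu> T \<in> sit_skew lam (bump \<mu> S)"
    and "sit_pop lam \<mu> T ` skew_cells lam (bump \<mu> S) = {1..m - 1}"
proof -
  let ?Y = "skew_cells lam \<mu>" and ?Y' = "skew_cells lam (bump \<mu> S)" and ?T = "sit_pop lam \<mu> T"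
  have Y': "?Y' = {c \<in> ?Y. T c \<noteq> 1}"
    using skew_cells_bump[OF one_rows_subset_addable[OF lam v T]] bump_cells_one_rows[OF T]
    unfolding S_def by blast
  have T2: "2 \<le> T c" if "c \<in> ?Y'" for c using that Y' sit_skew_pos[OF T, of c] by fastforce
  have pop: "?T c = T c - 1" if "c \<in> ?Y'" for c using that by (simp add: sit_pop_def S_def)
  have "T ` ?Y' = T ` ?Y - {1}" using Y' by auto
  also have "\<dots> = Suc ` {1..m - 1}" using m by (cases m) (auto simp: image_Suc_atLeastAtMost)
  finally have "T ` ?Y' = Suc ` {1..m - 1}" .
  moreover have "?T ` ?Y' = (\<lambda>v. v - 1) ` (T ` ?Y')"
    unfolding image_image using pop by (rule image_cong[OF refl])
  ultimately show img: "?T ` ?Y' = {1..m - 1}" by (simp only: image_image diff_Suc_1 image_ident)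
  show "?T \<in> sit_skew lam (bump \<mu> S)"
  proof (rule sit_skewI[OF _ _ _ img])
    show "?T c = 0" if "c \<notin> ?Y'" for c using that by (simp add: sit_pop_def S_def)
    show "?T (i, j) < ?T (i, j')" if "(i, j) \<in> ?Y'" "(i, j') \<in> ?Y'" "j < j'" for i j j'
      using that sit_skew_row[OF T, of i j j'] Y' pop[OF that(1)] pop[OF that(2)] T2[OF that(1)] by auto
    show "?T (i, j) < ?T (i', j)" if "(i, j) \<in> ?Y'" "(i', j) \<in> ?Y'" "i < i'" for i i' j
      using that sit_skew_col[OF T, of i j i'] Y' pop[OF that(1)] pop[OF that(2)] T2[OF that(1)] by auto
  qed
qed

lemma sit_push_sit_pop:
  assumes lam: "is_partition lam" and v: "subshape lam \<mu>" and T: "T \<in> sit_skew lam \<mu>"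
  shows "sit_push lam \<mu> (one_rows lam \<mu> T) (sit_pop lam \<mu> T) = T"
proof
  fix c
  let ?C = "bump_cells \<mu> (one_rows lam \<mu> T)" and ?Y' = "skew_cells lam (bump \<mu> (one_rows lam \<mu> T))"
  note dec = skew_cells_bump[OF one_rows_subset_addable[OF lam v T]]
  show "sit_push lam \<mu> (one_rows lam \<mu> T) (sit_pop lam \<mu> T) c = T c"
  proof (cases "c \<in> ?C")
    case True
    then show ?thesis using bump_cells_one_rows[OF T] by (simp add: sit_push_def)
  next
    case False
    show ?thesis
    proof (cases "c \<in> ?Y'")
      case True
      then have "1 \<le> T c" using sit_skew_pos[OF T] dec(1) by blast
      then show ?thesis using True False by (simp add: sit_push_def sit_pop_def)
    next
      case outside: False
      then have "c \<notin> skew_cells lam \<mu>" using False dec(1) by blast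
      then show ?thesis using False outside sit_skew_outside[OF T] by (simp add: sit_push_def)
    qed
  qed
qed

lemma sit_push_inverse:
  assumes S: "S \<subseteq> addable lam \<mu>" and T: "T \<in> sit_skew lam (bump \<mu> S)"
  shows "one_rows lam \<mu> (sit_push lam \<mu> S T) = S" and "sit_pop lam \<mu> (sit_push lam \<mu> S T) = T"
proof -
  note dec = skew_cells_bump[OF S]
  show rows: "one_rows lam \<mu> (sit_push lam \<mu> S T) = S"
  proof (rule Set.set_eqI)
    fix i
    let ?c = "(i, Suc (\<mu> i))"
    show "i \<in> one_rows lam \<mu> (sit_push lam \<mu> S T) \<longleftrightarrow> i \<in> S"
    proof (cases "i \<in> S")
      case True
      then have "?c \<in> bump_cells \<mu> S" by (simp add: mem_bump_cells)
      then show ?thesis using True bump_cells_subset[OF S] by (auto simp: one_rows_def sit_push_def)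
    next
      case False
      then have "?c \<notin> bump_cells \<mu> S" by (simp add: mem_bump_cells)
      then have "sit_push lam \<mu> S T ?c \<noteq> 1" if "?c \<in> skew_cells lam \<mu>"
        using that dec(1) sit_skew_pos[OF T, of ?c] by (auto simp: sit_push_def)
      then show ?thesis using False by (auto simp: one_rows_def)
    qed
  qed
  show "sit_pop lam \<mu> (sit_push lam \<mu> S T) = T"
  proof
    fix c
    show "sit_pop lam \<mu> (sit_push lam \<mu> S T) c = T c"
    proof (cases "c \<in> skew_cells lam (bump \<mu> S)")
      case True
      then have "c \<notin> bump_cells \<mu> S" using dec(2) by blast
      then show ?thesis using True by (simp add: sit_pop_def rows sit_push_def)
    next
      case False
      then show ?thesis using sit_skew_outside[OF T False] by (simp add: sit_pop_def rows)
    qed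
  qed
qed

lemma bij_betw_sit_push:
  assumes lam: "is_partition lam" and v: "subshape lam \<mu>" and ne: "skew_cells lam \<mu> \<noteq> {}"
  shows "bij_betw (\<lambda>(S, T). sit_push lam \<mu> S T)
           (SIGMA S:{S. S \<subseteq> addable lam \<mu> \<and> S \<noteq> {}}. sit_skew lam (bump \<mu> S)) (sit_skew lam \<mu>)"
proof (rule bij_betw_byWitness[where f' = "\<lambda>T. (one_rows lam \<mu> T, sit_pop lam \<mu> T)"])
  show "\<forall>T\<in>sit_skew lam \<mu>. (\<lambda>(S, T). sit_push lam \<mu> S T) (one_rows lam \<mu> T, sit_pop lam \<mu> T) = T"
    using sit_push_sit_pop[OF lam v] by simp
  show "\<forall>ST\<in>SIGMA S:{S. S \<subseteq> addable lam \<mu> \<and> S \<noteq> {}}. sit_skew lam (bump \<mu> S).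
          (\<lambda>T. (one_rows lam \<mu> T, sit_pop lam \<mu> T)) ((\<lambda>(S, T). sit_push lam \<mu> S T) ST) = ST"
    using sit_push_inverse by fastforce
  show "(\<lambda>T. (one_rows lam \<mu> T, sit_pop lam \<mu> T)) ` sit_skew lam \<mu>
          \<subseteq> (SIGMA S:{S. S \<subseteq> addable lam \<mu> \<and> S \<noteq> {}}. sit_skew lam (bump \<mu> S))"
  proof (rule image_subsetI)
    fix T assume T: "T \<in> sit_skew lam \<mu>"
    obtain m where "T ` skew_cells lam \<mu> = {1..m}" using sit_skew_image[OF T] by blast
    then have "sit_pop lam \<mu> T \<in> sit_skew lam (bump \<mu> (one_rows lam \<mu> T))"
      by (rule sit_pop_in_sit_skew(1)[OF lam v T])
    then show "(one_rows lam \<mu> T, sit_pop lam \<mu> T)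
                 \<in> (SIGMA S:{S. S \<subseteq> addable lam \<mu> \<and> S \<noteq> {}}. sit_skew lam (bump \<mu> S))"
      using one_rows_subset_addable[OF lam v T] one_rows_nonempty[OF T ne] by simp
  qed
  show "(\<lambda>(S, T). sit_push lam \<mu> S T) ` (SIGMA S:{S. S \<subseteq> addable lam \<mu> \<and> S \<noteq> {}}. sit_skew lam (bump \<mu> S))
          \<subseteq> sit_skew lam \<mu>"
  proof (rule image_subsetI)
    fix ST assume "ST \<in> (SIGMA S:{S. S \<subseteq> addable lam \<mu> \<and> S \<noteq> {}}. sit_skew lam (bump \<mu> S))"
    then obtain S T where ST: "ST = (S, T)" and S: "S \<subseteq> addable lam \<mu>" "S \<noteq> {}"
      and T: "T \<in> sit_skew lam (bump \<mu> S)" by blast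
    obtain m where "T ` skew_cells lam (bump \<mu> S) = {1..m}" using sit_skew_image[OF T] by blast
    from sit_push_in_sit_skew(1)[OF v S T this]
    show "(\<lambda>(S, T). sit_push lam \<mu> S T) ST \<in> sit_skew lam \<mu>" by (simp add: ST)
  qed
qed

lemma nu_1:
  assumes v: "subshape lam \<mu>" and T: "T \<in> sit_skew lam \<mu>"
  shows "nu lam T 1 = \<mu>"
proof
  fix i
  have "(i, j) \<in> young lam \<and> T (i, j) < 1 \<longleftrightarrow> 1 \<le> i \<and> 1 \<le> j \<and> j \<le> \<mu> i" for j
  proof -
    have "T (i, j) < 1 \<longleftrightarrow> (i, j) \<notin> skew_cells lam \<mu>"
      using sit_skew_pos[OF T] sit_skew_outside[OF T] by fastforce
    moreover have "\<mu> i \<le> part lam i" using v by (simp add: subshape_def)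
    ultimately show ?thesis by (auto simp: young_iff skew_cells_iff)
  qed
  then have "nu lam T 1 i = card {j. 1 \<le> i \<and> 1 \<le> j \<and> j \<le> \<mu> i}"
    by (simp add: nu_def)
  also have "{j. 1 \<le> i \<and> 1 \<le> j \<and> j \<le> \<mu> i} = (if i = 0 then {} else {1..\<mu> i})" by auto
  finally show "nu lam T 1 i = \<mu> i" using subshape_row_0[OF v] by simp
qed

lemma nu_sit_push_Suc:
  assumes S: "S \<subseteq> addable lam \<mu>" and T: "T \<in> sit_skew lam (bump \<mu> S)" and k: "1 \<le> k"
  shows "nu lam (sit_push lam \<mu> S T) (Suc k) = nu lam T k"
proof
  fix i
  have "sit_push lam \<mu> S T c < Suc k \<longleftrightarrow> T c < k" for c
  proof (cases "c \<in> skew_cells lam (bump \<mu> S)")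
    case True
    then have "c \<notin> bump_cells \<mu> S" using skew_cells_bump(2)[OF S] by blast
    with True show ?thesis by (simp add: sit_push_def)
  next
    case False
    then show ?thesis using sit_skew_outside[OF T False] k by (simp add: sit_push_def)
  qed
  then show "nu lam (sit_push lam \<mu> S T) (Suc k) i = nu lam T k i" by (simp add: nu_def)
qed

lemma prod_steps_sit_push:
  assumes v: "subshape lam \<mu>" and S: "S \<subseteq> addable lam \<mu>" "S \<noteq> {}"
    and T: "T \<in> sit_skew lam (bump \<mu> S)"
  shows "(\<Prod>k=1..sit_skew_max lam \<mu> (sit_push lam \<mu> S T). F (nu lam (sit_push lam \<mu> S T) k))
       = F \<mu> * (\<Prod>k=1..sit_skew_max lam (bump \<mu> S) T. F (nu lam T k))"
proof -
  let ?P = "sit_push lam \<mu> S T"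
  obtain m where m: "T ` skew_cells lam (bump \<mu> S) = {1..m}" using sit_skew_image[OF T] by blast
  note push = sit_push_in_sit_skew[OF v S T m]
  have "(\<Prod>k=1..sit_skew_max lam \<mu> ?P. F (nu lam ?P k)) = (\<Prod>k=1..Suc m. F (nu lam ?P k))"
    using sit_skew_max_eq[OF push(2)] by simp
  also have "\<dots> = F (nu lam ?P 1) * (\<Prod>k=1..m. F (nu lam ?P (Suc k)))"
    by (simp add: prod.atLeast_Suc_atMost prod.atLeast_Suc_atMost_Suc_shift del: prod.cl_ivl_Suc)
  also have "\<dots> = F \<mu> * (\<Prod>k=1..m. F (nu lam T k))"
    using nu_1[OF v push(1)] nu_sit_push_Suc[OF S(1) T] by simp
  finally show ?thesis using sit_skew_max_eq[OF m] by simp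
qed

lemma sit_skew_empty:
  assumes "skew_cells lam \<mu> = {}"
  shows "sit_skew lam \<mu> = {\<lambda>_. 0}"
proof -
  have "(\<lambda>_. 0) \<in> sit_skew lam \<mu>" by (rule sit_skewI[where m = 0]) (use assms in auto)
  moreover have "T = (\<lambda>_. 0)" if "T \<in> sit_skew lam \<mu>" for T
    using sit_skew_outside[OF that] assms by auto
  ultimately show ?thesis by blast
qed

lemma skew_sum_empty:
  assumes "skew_cells lam \<mu> = {}"
  shows "skew_sum lam F \<mu> = 1"
  using assms by (simp add: skew_sum_def sit_skew_empty sit_skew_max_def)

lemma skew_sum_rec:
  assumes lam: "is_partition lam" and v: "subshape lam \<mu>" and ne: "skew_cells lam \<mu> \<noteq> {}"
  shows "skew_sum lam F \<mu>
           = F \<mu> * (\<Sum>S\<in>{S. S \<subseteq> addable lam \<mu> \<and> S \<noteq> {}}. skew_sum lam F (bump \<mu> S))"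
proof -
  let ?SS = "{S. S \<subseteq> addable lam \<mu> \<and> S \<noteq> {}}"
  let ?g = "\<lambda>T. \<Prod>k=1..sit_skew_max lam \<mu> T. F (nu lam T k)"
  have "skew_sum lam F \<mu> = (\<Sum>(S, T)\<in>(SIGMA S:?SS. sit_skew lam (bump \<mu> S)). ?g (sit_push lam \<mu> S T))"
    unfolding skew_sum_def
    using sum.reindex_bij_betw[OF bij_betw_sit_push[OF lam v ne], of ?g]
    by (simp add: case_prod_unfold)
  also have "\<dots> = (\<Sum>S\<in>?SS. \<Sum>T\<in>sit_skew lam (bump \<mu> S). ?g (sit_push lam \<mu> S T))"
    using finite_addable[OF lam] by (subst sum.Sigma) (auto simp: finite_sit_skew)
  also have "\<dots> = (\<Sum>S\<in>?SS. F \<mu> * skew_sum lam F (bump \<mu> S))"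
    unfolding skew_sum_def sum_distrib_left
    by (intro sum.cong refl prod_steps_sit_push[OF v]) auto
  finally show ?thesis by (simp add: sum_distrib_left)
qed

lemma addable_nonempty:
  assumes lam: "is_partition lam" and v: "subshape lam \<mu>" and ne: "skew_cells lam \<mu> \<noteq> {}"
  shows "addable lam \<mu> \<noteq> {}"
proof -
  have ex: "\<exists>i. 1 \<le> i \<and> \<mu> i < part lam i" using ne by (auto simp: skew_cells_iff)
  define i where "i = (LEAST i. 1 \<le> i \<and> \<mu> i < part lam i)"
  have i: "1 \<le> i" "\<mu> i < part lam i" using LeastI_ex[OF ex] by (simp_all add: i_def)
  have "\<mu> i < \<mu> (i - 1)" if "i \<noteq> 1"
  proof -
    have "\<not> (1 \<le> i - 1 \<and> \<mu> (i - 1) < part lam (i - 1))"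
      using Least_le[of "\<lambda>i. 1 \<le> i \<and> \<mu> i < part lam i" "i - 1"] i(1) that by (auto simp: i_def)
    then have "part lam (i - 1) \<le> \<mu> (i - 1)" using i(1) that by (auto simp: not_less)
    moreover have "part lam i \<le> part lam (i - 1)" using part_antimono[OF lam, of "i - 1" i] i(1) that by simp
    ultimately show ?thesis using i(2) by simp
  qed
  then have "i \<in> addable lam \<mu>" using i by (auto simp: addable_def)
  then show ?thesis by auto
qed

lemma sit_skew_nonempty:
  assumes lam: "is_partition lam"
  shows "subshape lam \<mu> \<Longrightarrow> sit_skew lam \<mu> \<noteq> {}"
proof (induction \<mu> rule: measure_induct_rule[where f = "\<lambda>\<mu>. card (skew_cells lam \<mu>)"])
  case (less \<mu>)
  show ?case
  proof (cases "skew_cells lam \<mu> = {}")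
    case True
    then show ?thesis by (simp add: sit_skew_empty)
  next
    case False
    then obtain i where "i \<in> addable lam \<mu>" using addable_nonempty[OF lam less.prems] by blast
    then have S: "{i} \<subseteq> addable lam \<mu>" "{i} \<noteq> {}" by auto
    obtain T where T: "T \<in> sit_skew lam (bump \<mu> {i})"
      using less.IH[OF card_skew_cells_bump[OF S] subshape_bump[OF less.prems S(1)]] by blast
    obtain m where "T ` skew_cells lam (bump \<mu> {i}) = {1..m}" using sit_skew_image[OF T] by blast
    from sit_push_in_sit_skew(1)[OF less.prems S T this] show ?thesis by blast
  qed
qed

definition all_steps :: "nat list \<Rightarrow> ((nat \<Rightarrow> nat) \<Rightarrow> bool) \<Rightarrow> (nat \<Rightarrow> nat) \<Rightarrow> bool" where
  "all_steps lam P \<mu> \<longleftrightarrow> (\<forall>T\<in>sit_skew lam \<mu>. \<forall>k\<in>{1..sit_skew_max lam \<mu> T}. P (nu lam T k))"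

lemma all_steps_bump:
  assumes v: "subshape lam \<mu>" and S: "S \<subseteq> addable lam \<mu>" "S \<noteq> {}"
    and P: "all_steps lam P \<mu>"
  shows "all_steps lam P (bump \<mu> S)"
  unfolding all_steps_def
proof (intro ballI)
  fix T k assume T: "T \<in> sit_skew lam (bump \<mu> S)" and k: "k \<in> {1..sit_skew_max lam (bump \<mu> S) T}"
  obtain m where m: "T ` skew_cells lam (bump \<mu> S) = {1..m}" using sit_skew_image[OF T] by blast
  note push = sit_push_in_sit_skew[OF v S T m]
  have "Suc k \<in> {1..sit_skew_max lam \<mu> (sit_push lam \<mu> S T)}"
    using k sit_skew_max_eq[OF push(2)] sit_skew_max_eq[OF m] by simp
  then have "P (nu lam (sit_push lam \<mu> S T) (Suc k))" using P push(1) by (auto simp: all_steps_def)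
  then show "P (nu lam T k)" using nu_sit_push_Suc[OF S(1) T] k by simp
qed

lemma all_steps_self:
  assumes lam: "is_partition lam" and v: "subshape lam \<mu>" and ne: "skew_cells lam \<mu> \<noteq> {}"
    and P: "all_steps lam P \<mu>"
  shows "P \<mu>"
proof -
  obtain T where T: "T \<in> sit_skew lam \<mu>" using sit_skew_nonempty[OF lam v] by blast
  obtain m where m: "T ` skew_cells lam \<mu> = {1..m}" using sit_skew_image[OF T] by blast
  then have "1 \<in> {1..sit_skew_max lam \<mu> T}" using ne sit_skew_max_eq[OF m] by (cases m) auto
  then show ?thesis using P T nu_1[OF v T] by (auto simp: all_steps_def)
qed

section \<open>A determinant satisfying the recursion of the skew sums\<close>

text \<open>For nodes \<open>a\<^sub>r\<close> and column positions \<open>p\<^sub>c\<close> the entries are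
  \<open>a\<^sub>r\<^bsup>d-1-c\<^esup> \<Prod>\<^bsub>t<p\<^sub>c\<^esub> (A\<^sub>t / a\<^sub>r - 1)\<close>: raising \<open>p\<^sub>c\<close> by one multiplies column \<open>c\<close> entrywise by
  \<open>A\<^bsub>p\<^sub>c\<^esub> / a\<^sub>r - 1\<close>, and the entry vanishes as soon as \<open>p\<^sub>c\<close> exceeds a position \<open>q\<close> with
  \<open>a\<^sub>r = A\<^sub>q\<close>.\<close>

definition ratio_prod :: "(nat \<Rightarrow> 'a::field) \<Rightarrow> 'a \<Rightarrow> nat \<Rightarrow> 'a" where
  "ratio_prod A a x = (\<Prod>t\<in>{1..<x}. A t / a - 1)"

definition dm_entry :: "(nat \<Rightarrow> 'a::field) \<Rightarrow> (nat \<Rightarrow> 'a) \<Rightarrow> nat \<Rightarrow> nat \<Rightarrow> nat \<Rightarrow> nat \<Rightarrow> 'a" where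
  "dm_entry A a d r c x = a r ^ (d - 1 - c) * ratio_prod A (a r) x"

definition dm_mat :: "(nat \<Rightarrow> 'a::field) \<Rightarrow> (nat \<Rightarrow> 'a) \<Rightarrow> nat \<Rightarrow> (nat \<Rightarrow> nat) \<Rightarrow> 'a mat" where
  "dm_mat A a d p = mat d d (\<lambda>(r,c). dm_entry A a d r c (p c))"

definition dm_mat_step :: "(nat \<Rightarrow> 'a::field) \<Rightarrow> (nat \<Rightarrow> 'a) \<Rightarrow> nat \<Rightarrow> nat set \<Rightarrow> (nat \<Rightarrow> nat) \<Rightarrow> 'a mat" where
  "dm_mat_step A a d X p = mat d d (\<lambda>(r,c). if c \<in> X then dm_entry A a d r c (p c) + dm_entry A a d r c (Suc (p c))
      else dm_entry A a d r c (p c))"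

lemma prod_add_subsets:
  fixes F G :: "'b \<Rightarrow> 'a::comm_semiring_1"
  assumes I: "finite I" and X: "X \<subseteq> I"
  shows "(\<Prod>j\<in>I. if j \<in> X then F j + G j else F j) = (\<Sum>S\<in>Pow X. \<Prod>j\<in>I. if j \<in> S then G j else F j)"
proof -
  have split: "(\<Prod>j\<in>I. if j \<in> Y then H j else F j) = prod H Y * prod F (I - Y)"
    if "Y \<subseteq> I" for Y and H :: "'b \<Rightarrow> 'a"
  proof -
    have "I \<inter> {j. j \<in> Y} = Y" "I \<inter> - {j. j \<in> Y} = I - Y" using that by auto
    then show ?thesis using prod.If_cases[OF I, of "\<lambda>j. j \<in> Y" H F] by simp
  qed
  have fX: "finite X" using I X finite_subset by blast
  have "(\<Prod>j\<in>I. if j \<in> X then F j + G j else F j) = (\<Prod>j\<in>X. G j + F j) * prod F (I - X)"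
    using split[OF X, of "\<lambda>j. F j + G j"] by (simp add: add.commute)
  also have "\<dots> = (\<Sum>S\<in>Pow X. prod G S * prod F (X - S) * prod F (I - X))"
    by (simp add: prod_add[OF fX] sum_distrib_right)
  also have "\<dots> = (\<Sum>S\<in>Pow X. prod G S * prod F (I - S))"
  proof (intro sum.cong refl)
    fix S assume "S \<in> Pow X"
    then have "I - S = (X - S) \<union> (I - X)" "(X - S) \<inter> (I - X) = {}" using X by auto
    then have "prod F (I - S) = prod F (X - S) * prod F (I - X)"
      using fX I by (simp add: prod.union_disjoint)
    then show "prod G S * prod F (X - S) * prod F (I - X) = prod G S * prod F (I - S)"
      by (simp add: mult.assoc)
  qed
  also have "\<dots> = (\<Sum>S\<in>Pow X. \<Prod>j\<in>I. if j \<in> S then G j else F j)"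
    using split X by (intro sum.cong refl) auto
  finally show ?thesis .
qed

lemma dm_mat_carrier[simp]: "dm_mat A a d p \<in> carrier_mat d d" unfolding dm_mat_def by simp
lemma dm_mat_step_carrier[simp]: "dm_mat_step A a d X p \<in> carrier_mat d d" unfolding dm_mat_step_def by simp

lemma det_dm_mat_step:
  assumes "X \<subseteq> {0..<d}"
  shows "det (dm_mat_step A a d X p) = (\<Sum>S\<in>Pow X. det (dm_mat A a d (bump p S)))"
proof -
  let ?P = "{\<sigma>. \<sigma> permutes {0..<d}}"
  have "det (dm_mat_step A a d X p) = (\<Sum>\<sigma>\<in>?P. signof \<sigma> * (\<Prod>j<d. dm_mat_step A a d X p $$ (\<sigma> j, j)))"
    by (rule det_col[OF dm_mat_step_carrier])
  also have "\<dots> = (\<Sum>\<sigma>\<in>?P. signof \<sigma> * (\<Sum>S\<in>Pow X. \<Prod>j<d. dm_entry A a d (\<sigma> j) j (bump p S j)))"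
  proof (rule sum.cong[OF refl])
    fix \<sigma> assume "\<sigma> \<in> ?P"
    then have s: "\<And>j. j < d \<Longrightarrow> \<sigma> j < d" using permutes_in_image by fastforce
    have "(\<Prod>j<d. dm_mat_step A a d X p $$ (\<sigma> j, j)) = (\<Prod>j<d. if j \<in> X then dm_entry A a d (\<sigma> j) j (p j) + dm_entry A a d (\<sigma> j) j (Suc (p j)) else dm_entry A a d (\<sigma> j) j (p j))"
      by (rule prod.cong[OF refl]) (auto simp: dm_mat_step_def s)
    also have "\<dots> = (\<Sum>S\<in>Pow X. \<Prod>j<d. if j \<in> S then dm_entry A a d (\<sigma> j) j (Suc (p j)) else dm_entry A a d (\<sigma> j) j (p j))"
      by (rule prod_add_subsets) (use assms in auto)
    also have "\<dots> = (\<Sum>S\<in>Pow X. \<Prod>j<d. dm_entry A a d (\<sigma> j) j (bump p S j))"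
      by (intro sum.cong prod.cong refl) (auto simp: bump_def)
    finally show "signof \<sigma> * (\<Prod>j<d. dm_mat_step A a d X p $$ (\<sigma> j, j)) = signof \<sigma> * (\<Sum>S\<in>Pow X. \<Prod>j<d. dm_entry A a d (\<sigma> j) j (bump p S j))"
      by simp
  qed
  also have "\<dots> = (\<Sum>S\<in>Pow X. \<Sum>\<sigma>\<in>?P. signof \<sigma> * (\<Prod>j<d. dm_entry A a d (\<sigma> j) j (bump p S j)))"
    by (simp add: sum_distrib_left sum.swap[of _ ?P])
  also have "\<dots> = (\<Sum>S\<in>Pow X. det (dm_mat A a d (bump p S)))"
  proof (rule sum.cong[OF refl])
    fix S
    show "(\<Sum>\<sigma>\<in>?P. signof \<sigma> * (\<Prod>j<d. dm_entry A a d (\<sigma> j) j (bump p S j))) = det (dm_mat A a d (bump p S))"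
      unfolding det_col[OF dm_mat_carrier]
    proof (rule sum.cong[OF refl])
      fix \<sigma> assume "\<sigma> \<in> ?P"
      then have s: "\<And>j. j < d \<Longrightarrow> \<sigma> j < d" using permutes_in_image by fastforce
      show "signof \<sigma> * (\<Prod>j<d. dm_entry A a d (\<sigma> j) j (bump p S j)) = signof \<sigma> * (\<Prod>j<d. dm_mat A a d (bump p S) $$ (\<sigma> j, j))"
        by (auto simp: dm_mat_def s intro!: prod.cong)
    qed
  qed
  finally show ?thesis .
qed

lemma ratio_prod_Suc: "1 \<le> x \<Longrightarrow> ratio_prod A a (Suc x) = ratio_prod A a x * (A x / a - 1)"
proof -
  assume "1 \<le> x"
  then have "{1..<Suc x} = insert x {1..<x}" by auto
  then show ?thesis unfolding ratio_prod_def by (simp add: mult.commute)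
qed

lemma dm_entry_step:
  assumes "1 \<le> x" "a r \<noteq> 0"
  shows "dm_entry A a d r c x + dm_entry A a d r c (Suc x) = A x / a r * dm_entry A a d r c x"
  using assms unfolding dm_entry_def ratio_prod_Suc[OF assms(1)] by (simp add: field_simps)

lemma det_dm_mat_step_all:
  assumes "\<And>c. c < d \<Longrightarrow> 1 \<le> p c" "\<And>r. r < d \<Longrightarrow> a r \<noteq> 0"
  shows "det (dm_mat_step A a d {0..<d} p) = (\<Prod>c<d. A (p c)) / (\<Prod>r<d. a r) * det (dm_mat A a d p)"
proof -
  let ?P = "{\<sigma>. \<sigma> permutes {0..<d}}"
  have "det (dm_mat_step A a d {0..<d} p) = (\<Sum>\<sigma>\<in>?P. signof \<sigma> * (\<Prod>j<d. dm_mat_step A a d {0..<d} p $$ (\<sigma> j, j)))"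
    by (rule det_col[OF dm_mat_step_carrier])
  also have "\<dots> = (\<Sum>\<sigma>\<in>?P. (\<Prod>c<d. A (p c)) / (\<Prod>r<d. a r) * (signof \<sigma> * (\<Prod>j<d. dm_mat A a d p $$ (\<sigma> j, j))))"
  proof (rule sum.cong[OF refl])
    fix \<sigma> assume sp: "\<sigma> \<in> ?P"
    then have s: "\<And>j. j < d \<Longrightarrow> \<sigma> j < d" using permutes_in_image by fastforce
    have "(\<Prod>j<d. dm_mat_step A a d {0..<d} p $$ (\<sigma> j, j)) = (\<Prod>j<d. A (p j) / a (\<sigma> j) * dm_mat A a d p $$ (\<sigma> j, j))"
    proof (rule prod.cong[OF refl])
      fix j assume "j \<in> {..<d}"
      then have j: "j < d" by simp
      show "dm_mat_step A a d {0..<d} p $$ (\<sigma> j, j) = A (p j) / a (\<sigma> j) * dm_mat A a d p $$ (\<sigma> j, j)"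
        using dm_entry_step[of "p j" a "\<sigma> j" A d j] assms(1)[OF j] assms(2)[OF s[OF j]]
        by (simp add: dm_mat_step_def dm_mat_def s j)
    qed
    also have "\<dots> = (\<Prod>j<d. A (p j)) / (\<Prod>j<d. a (\<sigma> j)) * (\<Prod>j<d. dm_mat A a d p $$ (\<sigma> j, j))"
      by (simp add: prod.distrib prod_dividef)
    also have "(\<Prod>j<d. a (\<sigma> j)) = (\<Prod>r<d. a r)"
    proof -
      have "\<sigma> permutes {..<d}" using sp by (simp add: atLeast0LessThan)
      then show ?thesis by (rule prod.permute[symmetric, where g = a, simplified comp_def])
    qed
    finally show "signof \<sigma> * (\<Prod>j<d. dm_mat_step A a d {0..<d} p $$ (\<sigma> j, j)) = (\<Prod>c<d. A (p c)) / (\<Prod>r<d. a r) * (signof \<sigma> * (\<Prod>j<d. dm_mat A a d p $$ (\<sigma> j, j)))"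
      by simp
  qed
  also have "\<dots> = (\<Prod>c<d. A (p c)) / (\<Prod>r<d. a r) * det (dm_mat A a d p)"
    unfolding det_col[OF dm_mat_carrier] by (simp add: sum_distrib_left)
  finally show ?thesis .
qed

lemma det_dm_mat_step_insert_blocked:
  assumes c: "1 \<le> c" "c < d" and "c \<notin> X" "c - 1 \<in> X" and blk: "Suc (p c) = p (c - 1)"
    and AP: "A (p (c - 1)) \<noteq> 0" and P1: "1 \<le> p (c - 1)" and a: "\<And>r. r < d \<Longrightarrow> a r \<noteq> 0"
  shows "det (dm_mat_step A a d (insert c X) p) = det (dm_mat_step A a d X p)"
proof -
  let ?P = "p (c - 1)"
  have "dm_mat_step A a d (insert c X) p = addcol (1 / A ?P) c (c - 1) (dm_mat_step A a d X p)"
  proof (rule eq_matI)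
    fix r j assume r: "r < dim_row (addcol (1 / A ?P) c (c - 1) (dm_mat_step A a d X p))"
      and j: "j < dim_col (addcol (1 / A ?P) c (c - 1) (dm_mat_step A a d X p))"
    then have rd: "r < d" and jd: "j < d" by (auto simp: dm_mat_step_def mat_addcol_def)
    show "dm_mat_step A a d (insert c X) p $$ (r, j) = addcol (1 / A ?P) c (c - 1) (dm_mat_step A a d X p) $$ (r, j)"
    proof (cases "j = c")
      case True
      have exponent: "d - 1 - (c - 1) = Suc (d - 1 - c)" using c by simp
      have "dm_entry A a d r (c - 1) ?P + dm_entry A a d r (c - 1) (Suc ?P) = A ?P / a r * dm_entry A a d r (c - 1) ?P"
        using dm_entry_step[of ?P a r A d "c - 1"] P1 a[OF rd] by simp
      then have "1 / A ?P * (dm_entry A a d r (c - 1) ?P + dm_entry A a d r (c - 1) (Suc ?P)) = dm_entry A a d r c (Suc (p c))"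
        using AP a[OF rd] unfolding blk dm_entry_def exponent by (simp add: field_simps)
      then show ?thesis using True rd c assms(3,4)
        by (simp add: dm_mat_step_def mat_addcol_def)
    next
      case False
      then show ?thesis using rd jd by (simp add: dm_mat_step_def mat_addcol_def)
    qed
  qed (auto simp: dm_mat_step_def mat_addcol_def)
  moreover have "det (addcol (1 / A ?P) c (c - 1) (dm_mat_step A a d X p)) = det (dm_mat_step A a d X p)"
    by (rule det_addcol[where n = d]) (use c in auto)
  ultimately show ?thesis by simp
qed

lemma det_dm_mat_step_remove_blocked:
  assumes p1: "\<And>c. c < d \<Longrightarrow> 1 \<le> p c" and Ap: "\<And>c. c < d \<Longrightarrow> A (p c) \<noteq> 0"
    and a: "\<And>r. r < d \<Longrightarrow> a r \<noteq> 0"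
  shows "det (dm_mat_step A a d {0..<d} p) = det (dm_mat_step A a d ({0..<d} - {c. 1 \<le> c \<and> c < d \<and> Suc (p c) = p (c - 1)}) p)"
proof -
  define Blocked where "Blocked = {c. 1 \<le> c \<and> c < d \<and> Suc (p c) = p (c - 1)}"
  define Free where "Free = {0..<d} - Blocked"
  have "k \<le> d \<Longrightarrow> det (dm_mat_step A a d (Free \<union> {c\<in>Blocked. c < k}) p) = det (dm_mat_step A a d Free p)" for k
  proof (induction k)
    case 0 then show ?case by simp
  next
    case (Suc k)
    show ?case
    proof (cases "k \<in> Blocked")
      case True
      then have k: "1 \<le> k" "k < d" "Suc (p k) = p (k - 1)" unfolding Blocked_def by auto
      have eq: "Free \<union> {c\<in>Blocked. c < Suc k} = insert k (Free \<union> {c\<in>Blocked. c < k})"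
        using True by auto
      have "k \<notin> Free \<union> {c\<in>Blocked. c < k}" using True unfolding Free_def by auto
      moreover have "k - 1 \<in> Free \<union> {c\<in>Blocked. c < k}" using k unfolding Free_def by auto
      ultimately have "det (dm_mat_step A a d (insert k (Free \<union> {c\<in>Blocked. c < k})) p) = det (dm_mat_step A a d (Free \<union> {c\<in>Blocked. c < k}) p)"
        using det_dm_mat_step_insert_blocked[of k d "Free \<union> {c\<in>Blocked. c < k}" p A a] k Ap p1 a by auto
      then show ?thesis using Suc eq by simp
    next
      case False
      then have "Free \<union> {c\<in>Blocked. c < Suc k} = Free \<union> {c\<in>Blocked. c < k}" by (auto simp: less_Suc_eq)
      then show ?thesis using Suc by simp
    qed
  qed
  from this[of d] have "det (dm_mat_step A a d (Free \<union> {c\<in>Blocked. c < d}) p) = det (dm_mat_step A a d Free p)" by simp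
  moreover have "Free \<union> {c\<in>Blocked. c < d} = {0..<d}" unfolding Free_def Blocked_def by auto
  ultimately show ?thesis unfolding Free_def Blocked_def by simp
qed

lemma ratio_prod_eq_0: "1 \<le> t \<Longrightarrow> t < x \<Longrightarrow> A t \<noteq> 0 \<Longrightarrow> ratio_prod A (A t) x = 0"
  unfolding ratio_prod_def by (rule prod_zero) auto

lemma det_dm_mat_eq_0:
  assumes a: "\<And>r. r < d \<Longrightarrow> a r = A (q r)" "\<And>r. r < d \<Longrightarrow> A (q r) \<noteq> 0"
    and q1: "\<And>r. r < d \<Longrightarrow> 1 \<le> q r"
    and qdec: "\<And>c. Suc c < d \<Longrightarrow> q (Suc c) < q c"
    and pdec: "\<And>c. Suc c < d \<Longrightarrow> p (Suc c) < p c"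
    and k: "k < d" "q k < p k"
  shows "det (dm_mat A a d p) = 0"
proof -
  let ?P = "{\<sigma>. \<sigma> permutes {0..<d}}"
  have "det (dm_mat A a d p) = (\<Sum>\<sigma>\<in>?P. signof \<sigma> * (\<Prod>j<d. dm_mat A a d p $$ (\<sigma> j, j)))"
    by (rule det_col[OF dm_mat_carrier])
  also have "\<dots> = 0"
  proof (rule sum.neutral, rule ballI)
    fix \<sigma> assume sp: "\<sigma> \<in> ?P"
    then have s: "\<And>j. j < d \<Longrightarrow> \<sigma> j < d" using permutes_in_image by fastforce
    have inj: "inj_on \<sigma> {0..k}" using sp permutes_inj_on by (metis mem_Collect_eq permutes_inj inj_on_subset subset_UNIV)
    have "\<exists>j\<le>k. k \<le> \<sigma> j"
    proof (rule ccontr)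
      assume "\<not> ?thesis"
      then have "\<sigma> ` {0..k} \<subseteq> {0..<k}" by force
      from card_inj_on_le[OF inj this] show False by simp
    qed
    then obtain j where j: "j \<le> k" "k \<le> \<sigma> j" by blast
    have jd: "j < d" using j k by simp
    have "q (\<sigma> j) \<le> q k" using descending_below_le[where f = q, OF qdec s[OF jd] j(2)] .
    moreover have "p k \<le> p j" using descending_below_le[where f = p, OF pdec k(1) j(1)] .
    ultimately have "q (\<sigma> j) < p j" using k by simp
    then have "dm_mat A a d p $$ (\<sigma> j, j) = 0"
      using s[OF jd] jd a[OF s[OF jd]] q1[OF s[OF jd]] assms(2)[OF s[OF jd]]
      by (simp add: dm_mat_def dm_entry_def ratio_prod_eq_0)
    then have "(\<Prod>j<d. dm_mat A a d p $$ (\<sigma> j, j)) = 0"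
      using jd by (intro prod_zero) auto
    then show "signof \<sigma> * (\<Prod>j<d. dm_mat A a d p $$ (\<sigma> j, j)) = 0" by simp
  qed
  finally show ?thesis .
qed

lemma det_dm_mat_diag:
  assumes a: "\<And>r. r < d \<Longrightarrow> a r = A (q r)" "\<And>r. r < d \<Longrightarrow> A (q r) \<noteq> 0"
    and q1: "\<And>r. r < d \<Longrightarrow> 1 \<le> q r"
    and qdec: "\<And>c. Suc c < d \<Longrightarrow> q (Suc c) < q c"
  shows "det (dm_mat A a d q) = (\<Prod>r<d. dm_entry A a d r r (q r))"
proof -
  have ut: "upper_triangular (dm_mat A a d q)"
    unfolding upper_triangular_def
  proof (intro allI impI)
    fix i j assume i: "i < dim_row (dm_mat A a d q)" and ji: "j < i"
    then have id: "i < d" by (simp add: dm_mat_def)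
    have "q i < q j"
    proof -
      have "q i \<le> q (Suc j)" using descending_below_le[where f = q, OF qdec id, of "Suc j"] ji by simp
      moreover have "q (Suc j) < q j" using qdec[of j] ji id by simp
      ultimately show ?thesis by simp
    qed
    then show "dm_mat A a d q $$ (i, j) = 0"
      using id ji a[OF id] q1[OF id] assms(2)[OF id] by (simp add: dm_mat_def dm_entry_def ratio_prod_eq_0)
  qed
  have "det (dm_mat A a d q) = prod_list (diag_mat (dm_mat A a d q))"
    by (rule det_upper_triangular[OF ut dm_mat_carrier])
  also have "\<dots> = (\<Prod>r<d. dm_entry A a d r r (q r))"
    unfolding diag_mat_def by (simp add: dm_mat_def prod.list_conv_set_nth atLeast0LessThan)
  finally show ?thesis .
qed

lemma det_mat_row_factor:
  "det (mat n n (\<lambda>(r,c). f r * g r c)) = (\<Prod>r<n. f r) * det (mat n n (\<lambda>(r,c). g r c))"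
proof -
  let ?P = "{\<sigma>. \<sigma> permutes {0..<n}}"
  have "det (mat n n (\<lambda>(r,c). f r * g r c)) = (\<Sum>\<sigma>\<in>?P. signof \<sigma> * (\<Prod>i = 0..<n. mat n n (\<lambda>(r,c). f r * g r c) $$ (i, \<sigma> i)))"
    by (rule det_def') simp
  also have "\<dots> = (\<Sum>\<sigma>\<in>?P. (\<Prod>r<n. f r) * (signof \<sigma> * (\<Prod>i = 0..<n. mat n n (\<lambda>(r,c). g r c) $$ (i, \<sigma> i))))"
  proof (rule sum.cong[OF refl])
    fix \<sigma> assume "\<sigma> \<in> ?P"
    then have s: "\<And>j. j < n \<Longrightarrow> \<sigma> j < n" using permutes_in_image by fastforce
    have "(\<Prod>i = 0..<n. mat n n (\<lambda>(r,c). f r * g r c) $$ (i, \<sigma> i)) = (\<Prod>i = 0..<n. f i * mat n n (\<lambda>(r,c). g r c) $$ (i, \<sigma> i))"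
      by (rule prod.cong) (auto simp: s)
    also have "\<dots> = (\<Prod>r<n. f r) * (\<Prod>i = 0..<n. mat n n (\<lambda>(r,c). g r c) $$ (i, \<sigma> i))"
      by (simp add: prod.distrib atLeast0LessThan)
    finally show "signof \<sigma> * (\<Prod>i = 0..<n. mat n n (\<lambda>(r,c). f r * g r c) $$ (i, \<sigma> i)) = (\<Prod>r<n. f r) * (signof \<sigma> * (\<Prod>i = 0..<n. mat n n (\<lambda>(r,c). g r c) $$ (i, \<sigma> i)))"
      by (simp add: ac_simps)
  qed
  also have "\<dots> = (\<Prod>r<n. f r) * det (mat n n (\<lambda>(r,c). g r c))"
    by (subst det_def'[of _ n]) (auto simp: sum_distrib_left)
  finally show ?thesis .
qed

lemma det_lower_unitriangular:
  assumes "U \<in> carrier_mat n n" "\<And>i j. i < j \<Longrightarrow> j < n \<Longrightarrow> U $$ (i, j) = 0"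
    and "\<And>i. i < n \<Longrightarrow> U $$ (i, i) = 1"
  shows "det U = 1"
proof -
  have "diag_mat U = map (\<lambda>i. 1) [0..<n]"
    unfolding diag_mat_def using assms(1,3) by (intro map_cong) auto
  then show ?thesis
    using det_lower_triangular[OF assms(2,1)] by (simp add: map_replicate_const)
qed

text \<open>Column \<open>c\<close> minus \<open>A\<^bsub>m-c\<^esub> - a\<^bsub>m\<^esub>\<close> times column \<open>c + 1\<close>, for all \<open>c < m\<close> at once: right
  multiplication by a unitriangular matrix.\<close>

lemma vandermonde_column_reduction:
  fixes A a :: "nat \<Rightarrow> 'a::field"
  shows "det (mat (Suc m) (Suc m) (\<lambda>(r,c). \<Prod>t\<in>{1..<Suc m-c}. (A t - a r)))
       = det (mat (Suc m) (Suc m)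
           (\<lambda>(r,c). if c = m then 1 else (a m - a r) * (\<Prod>t\<in>{1..<m-c}. (A t - a r))))"
proof -
  define M where "M = mat (Suc m) (Suc m) (\<lambda>(r,c). \<Prod>t\<in>{1..<Suc m-c}. (A t - a r))"
  define U where "U = mat (Suc m) (Suc m) (\<lambda>(i,j). if i = j then 1 else if i = Suc j then - (A (m - j) - a m) else (0::'a))"
  define N where "N = mat (Suc m) (Suc m) (\<lambda>(r,c). if c = m then 1 else (a m - a r) * (\<Prod>t\<in>{1..<m-c}. (A t - a r)))"
  have Mc: "M \<in> carrier_mat (Suc m) (Suc m)" and Uc: "U \<in> carrier_mat (Suc m) (Suc m)"
    unfolding M_def U_def by auto
  have dU: "det U = 1"
    by (rule det_lower_unitriangular[OF Uc]) (auto simp: U_def)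
  have MU: "M * U = N"
  proof (rule eq_matI)
    fix r c assume "r < dim_row N" "c < dim_col N"
    then have r: "r < Suc m" and c: "c < Suc m" by (auto simp: N_def)
    have "(M * U) $$ (r, c) = (\<Sum>l\<in>{0..<Suc m}. M $$ (r, l) * U $$ (l, c))"
      using r c Mc Uc by (simp add: scalar_prod_def)
    also have "\<dots> = (\<Sum>l\<in>{0..<Suc m}. (if l = c then M $$ (r, c) else 0) + (if l = Suc c then M $$ (r, Suc c) * (- (A (m - c) - a m)) else 0))"
      by (rule sum.cong) (auto simp: U_def c)
    also have "\<dots> = M $$ (r, c) + (if Suc c < Suc m then M $$ (r, Suc c) * (- (A (m - c) - a m)) else 0)"
      using c by (simp add: sum.distrib)
    also have "\<dots> = N $$ (r, c)"
    proof (cases "c = m")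
      case True then show ?thesis using r by (simp add: M_def N_def)
    next
      case False
      then have cm: "c < m" using c by simp
      have "{1..<Suc m - c} = insert (m - c) {1..<m - c}" using cm by auto
      then have "M $$ (r, c) = (A (m - c) - a r) * (\<Prod>t\<in>{1..<m-c}. (A t - a r))"
        using r c by (simp add: M_def)
      moreover have "M $$ (r, Suc c) = (\<Prod>t\<in>{1..<m-c}. (A t - a r))"
        using r cm by (simp add: M_def)
      ultimately show ?thesis using r c cm by (simp add: N_def algebra_simps)
    qed
    finally show "(M * U) $$ (r, c) = N $$ (r, c)" .
  qed (auto simp: M_def U_def N_def)
  show ?thesis
    using det_mult[OF Mc Uc] dU MU by (simp add: M_def N_def)
qed

lemma det_mat_prod_vandermonde:
  fixes A a :: "nat \<Rightarrow> 'a::field"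
  shows "det (mat n n (\<lambda>(r,c). \<Prod>t\<in>{1..<n-c}. (A t - a r))) = (\<Prod>r'<n. \<Prod>r<r'. (a r' - a r))"
proof (induction n)
  case 0
  then show ?case by (simp add: det_def)
next
  case (Suc m)
  define N where "N = mat (Suc m) (Suc m)
    (\<lambda>(r,c). if c = m then 1 else (a m - a r) * (\<Prod>t\<in>{1..<m-c}. (A t - a r)))"
  have "det (mat (Suc m) (Suc m) (\<lambda>(r,c). \<Prod>t\<in>{1..<Suc m-c}. (A t - a r))) = det N"
    unfolding N_def by (rule vandermonde_column_reduction)
  also have "det N = (\<Sum>j<Suc m. N $$ (m, j) * cofactor N m j)"
    by (rule laplace_expansion_row) (auto simp: N_def)
  also have "\<dots> = det (mat_delete N m m)"
    by (subst sum.remove[of _ m]) (auto simp: N_def cofactor_def intro!: sum.neutral)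
  also have "mat_delete N m m = mat m m (\<lambda>(r,c). (a m - a r) * (\<Prod>t\<in>{1..<m-c}. (A t - a r)))"
    by (rule eq_matI) (auto simp: mat_delete_def N_def)
  also have "det \<dots> = (\<Prod>r<m. (a m - a r)) * det (mat m m (\<lambda>(r,c). \<Prod>t\<in>{1..<m-c}. (A t - a r)))"
    by (rule det_mat_row_factor)
  finally show ?case using Suc.IH by (simp add: mult.commute)
qed

lemma dm_mat_cong: "(\<And>c. c < d \<Longrightarrow> p c = p' c) \<Longrightarrow> dm_mat A a d p = dm_mat A a d p'"
  unfolding dm_mat_def by (rule eq_matI) auto

lemma det_dm_mat_bump_eq_0:
  assumes a: "\<And>r. r < d \<Longrightarrow> a r = A (q r)" "\<And>r. r < d \<Longrightarrow> A (q r) \<noteq> 0"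
    and q1: "\<And>r. r < d \<Longrightarrow> 1 \<le> q r"
    and qdec: "\<And>c. Suc c < d \<Longrightarrow> q (Suc c) < q c"
    and pdec: "\<And>c. Suc c < d \<Longrightarrow> p (Suc c) < p c"
    and unblocked: "\<And>c. c \<in> S \<Longrightarrow> 1 \<le> c \<Longrightarrow> Suc (p c) \<noteq> p (c - 1)"
    and k: "k \<in> S" "k < d" "p k = q k"
  shows "det (dm_mat A a d (bump p S)) = 0"
proof (rule det_dm_mat_eq_0[where k = k and q = q])
  show "bump p S (Suc c) < bump p S c" if "Suc c < d" for c
    using pdec[OF that] unblocked[of "Suc c"] by (auto simp: bump_def)
  show "q k < bump p S k" using k by (simp add: bump_def)
qed (use a q1 qdec k in auto)

text \<open>The columns \<open>c\<close> with \<open>p\<^bsub>c\<^esub> + 1 = p\<^bsub>c-1\<^esub>\<close> are \<^emph>\<open>blocked\<close>: splitting them can be undone by a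
  column operation.  Splitting all other columns and expanding multilinearly, only the sets of
  columns \<open>c\<close> with \<open>p\<^bsub>c\<^esub> < q\<^bsub>c\<^esub>\<close> survive.\<close>

lemma det_dm_mat_rec:
  assumes a: "\<And>r. r < d \<Longrightarrow> a r = A (q r)" and Aq: "\<And>r. r < d \<Longrightarrow> A (q r) \<noteq> 0"
    and q1: "\<And>r. r < d \<Longrightarrow> 1 \<le> q r"
    and qdec: "\<And>c. Suc c < d \<Longrightarrow> q (Suc c) < q c"
    and pdec: "\<And>c. Suc c < d \<Longrightarrow> p (Suc c) < p c"
    and p1: "\<And>c. c < d \<Longrightarrow> 1 \<le> p c" and pq: "\<And>c. c < d \<Longrightarrow> p c \<le> q c"
    and Ap: "\<And>c. c < d \<Longrightarrow> A (p c) \<noteq> 0"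
  shows "(\<Prod>r<d. a r) * (\<Sum>S\<in>Pow {c. c < d \<and> (c = 0 \<or> Suc (p c) \<noteq> p (c - 1)) \<and> p c < q c}.
            det (dm_mat A a d (bump p S)))
       = (\<Prod>c<d. A (p c)) * det (dm_mat A a d p)"
proof -
  define Free where "Free = {0..<d} - {c. 1 \<le> c \<and> c < d \<and> Suc (p c) = p (c - 1)}"
  define Addable where "Addable = {c. c < d \<and> (c = 0 \<or> Suc (p c) \<noteq> p (c - 1)) \<and> p c < q c}"
  have anz: "\<And>r. r < d \<Longrightarrow> a r \<noteq> 0" using a Aq by simp
  have "(\<Prod>c<d. A (p c)) / (\<Prod>r<d. a r) * det (dm_mat A a d p) = det (dm_mat_step A a d {0..<d} p)"
    using det_dm_mat_step_all[of d p a A] p1 anz by simp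
  also have "\<dots> = det (dm_mat_step A a d Free p)"
    unfolding Free_def using det_dm_mat_step_remove_blocked[of d p A a] p1 Ap anz by simp
  also have "\<dots> = (\<Sum>S\<in>Pow Free. det (dm_mat A a d (bump p S)))"
    by (rule det_dm_mat_step) (auto simp: Free_def)
  also have "\<dots> = (\<Sum>S\<in>Pow Addable. det (dm_mat A a d (bump p S)))"
  proof (rule sum.mono_neutral_right)
    show "\<forall>S\<in>Pow Free - Pow Addable. det (dm_mat A a d (bump p S)) = 0"
    proof
      fix S assume S: "S \<in> Pow Free - Pow Addable"
      then obtain k where k: "k \<in> S" "k \<notin> Addable" by auto
      have "k < d" "p k = q k" using k S pq[of k] by (auto simp: Free_def Addable_def)
      then show "det (dm_mat A a d (bump p S)) = 0"
        by (intro det_dm_mat_bump_eq_0[where A = A and a = a and d = d and p = p and q = q and k = k])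
          (use a Aq q1 qdec pdec S k(1) in \<open>auto simp: Free_def\<close>)
    qed
  qed (auto simp: Free_def Addable_def)
  finally show ?thesis
    unfolding Addable_def[symmetric] using anz by (simp add: field_simps prod_zero_iff)
qed

section \<open>The determinant of a shape\<close>

text \<open>The nodes are \<open>a\<^sub>r = A\<^bsub>\<lambda>\<^bsub>r+1\<^esub>+d-r\<^esub>\<close> and the columns of \<open>shape_det A lam d \<mu>\<close> sit at the particles
  of \<open>\<mu>\<close>. \<open>step_weight\<close> is the factor of the theorem attached to \<open>\<nu> = \<nu>(T\<^bsub><k\<^esub>)\<close>, with
  \<open>1 + \<beta> y\<^sub>t\<close> abstracted to \<open>A\<^sub>t\<close>.\<close>

definition particle_val :: "(nat \<Rightarrow> 'a::field) \<Rightarrow> nat list \<Rightarrow> nat \<Rightarrow> nat \<Rightarrow> 'a" where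
  "particle_val A lam d r = A (particle d (part lam) r)"

definition shape_det :: "(nat \<Rightarrow> 'a::field) \<Rightarrow> nat list \<Rightarrow> nat \<Rightarrow> (nat \<Rightarrow> nat) \<Rightarrow> 'a" where
  "shape_det A lam d \<mu> = det (dm_mat A (particle_val A lam d) d (particle d \<mu>))"

definition shape_ratio :: "(nat \<Rightarrow> 'a::field) \<Rightarrow> nat list \<Rightarrow> nat \<Rightarrow> (nat \<Rightarrow> nat) \<Rightarrow> 'a" where
  "shape_ratio A lam d \<nu> = (\<Prod>i=1..d. A (\<nu> i + d - i + 1) / A (part lam i + d - i + 1))"

definition step_weight :: "(nat \<Rightarrow> 'a::field) \<Rightarrow> nat list \<Rightarrow> nat \<Rightarrow> (nat \<Rightarrow> nat) \<Rightarrow> 'a" where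
  "step_weight A lam d \<nu> = 1 / (shape_ratio A lam d \<nu> - 1)"

lemma prod_particle: "(\<Prod>c<d. f (Suc c) (particle d \<mu> c)) = (\<Prod>i=1..d. f i (\<mu> i + d - i + 1))"
proof -
  have "Suc (n + d - Suc c) = n + d - c" if "c < d" for n c :: nat using that by simp
  then have "(\<Prod>c<d. f (Suc c) (particle d \<mu> c)) = (\<Prod>c<d. f (Suc c) (\<mu> (Suc c) + d - Suc c + 1))"
    by (intro prod.cong) (simp_all add: particle_def)
  also have "\<dots> = (\<Prod>i=1..d. f i (\<mu> i + d - i + 1))"
    using prod.atLeast1_atMost_eq[of "\<lambda>i. f i (\<mu> i + d - i + 1)" d] by simp
  finally show ?thesis .
qed

lemma shape_ratio_eq:
  "shape_ratio A lam d \<mu> = (\<Prod>c<d. A (particle d \<mu> c)) / (\<Prod>r<d. particle_val A lam d r)"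
  unfolding shape_ratio_def particle_val_def prod_particle[of "\<lambda>_. A"] by (simp add: prod_dividef)

lemma power_mult_ratio_prod:
  fixes a :: "'a::field"
  assumes "a \<noteq> 0"
  shows "a ^ (x - 1) * ratio_prod A a x = (\<Prod>t\<in>{1..<x}. A t - a)"
proof -
  have "a ^ (x - 1) = (\<Prod>t\<in>{1..<x}. a)" by simp
  then have "a ^ (x - 1) * ratio_prod A a x = (\<Prod>t\<in>{1..<x}. a * (A t / a - 1))"
    by (simp add: ratio_prod_def prod.distrib)
  also have "\<dots> = (\<Prod>t\<in>{1..<x}. A t - a)" using assms by (simp add: algebra_simps)
  finally show ?thesis .
qed

lemma prod_pairs_swap: "(\<Prod>r'<(n::nat). \<Prod>r<r'. f r r') = (\<Prod>r<n. \<Prod>r'\<in>{r<..<n}. f r r')"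
proof (induction n)
  case (Suc n)
  have "(\<Prod>r<Suc n. \<Prod>r'\<in>{r<..<Suc n}. f r r') = (\<Prod>r<n. (\<Prod>r'\<in>{r<..<n}. f r r') * f r n)"
  proof -
    have "{r<..<Suc n} = insert n {r<..<n}" if "r < n" for r using that by auto
    moreover have "{n<..<Suc n} = {}" by auto
    ultimately show ?thesis by (simp add: mult.commute)
  qed
  then show ?case using Suc.IH by (simp add: prod.distrib)
qed simp

lemma particle_subshape:
  assumes v: "subshape lam \<mu>"
  shows "Suc c < d \<Longrightarrow> particle d \<mu> (Suc c) < particle d \<mu> c"
    and "c < d \<Longrightarrow> 1 \<le> particle d \<mu> c"
    and "particle d \<mu> c \<le> particle d (part lam) c"
proof -
  have "\<mu> (Suc (Suc c)) \<le> \<mu> (Suc c)" using v by (simp add: subshape_def)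
  then show "Suc c < d \<Longrightarrow> particle d \<mu> (Suc c) < particle d \<mu> c"
    by (simp add: particle_def)
  show "c < d \<Longrightarrow> 1 \<le> particle d \<mu> c" by (simp add: particle_def)
  have "\<mu> (Suc c) \<le> part lam (Suc c)" using v by (simp add: subshape_def)
  then show "particle d \<mu> c \<le> particle d (part lam) c"
    by (simp add: particle_def)
qed

context
  fixes A :: "nat \<Rightarrow> 'a::field" and lam :: "nat list" and d :: nat
  assumes lam: "is_partition lam" and len: "length lam \<le> d"
    and A_nonzero: "\<And>t. 1 \<le> t \<Longrightarrow> t \<le> part lam 1 + d \<Longrightarrow> A t \<noteq> 0"
begin

lemma particle_val_nonzero: "r < d \<Longrightarrow> particle_val A lam d r \<noteq> 0"
  using particle_part_range[OF lam] A_nonzero by (simp add: particle_val_def)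

lemma A_particle_nonzero:
  assumes "subshape lam \<mu>" "c < d"
  shows "A (particle d \<mu> c) \<noteq> 0"
  using particle_subshape(3)[OF assms(1), of d c] particle_part_range[OF lam, of c d] A_nonzero[of "particle d \<mu> c"]
    assms(2) by (simp add: particle_def)

lemma addable_columns_eq:
  assumes v: "subshape lam \<mu>"
  shows "{c. c < d \<and> (c = 0 \<or> Suc (particle d \<mu> c) \<noteq> particle d \<mu> (c - 1))
              \<and> particle d \<mu> c < particle d (part lam) c}
       = {c. Suc c \<in> addable lam \<mu>}"
proof (rule Set.set_eqI, rule iffI)
  fix c
  assume "c \<in> {c. c < d \<and> (c = 0 \<or> Suc (particle d \<mu> c) \<noteq> particle d \<mu> (c - 1))
                 \<and> particle d \<mu> c < particle d (part lam) c}"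
  moreover have "\<mu> (Suc c) \<le> \<mu> c" if "c \<noteq> 0" using v that by (simp add: subshape_def)
  ultimately show "c \<in> {c. Suc c \<in> addable lam \<mu>}"
    by (cases c) (auto simp: addable_def particle_def)
next
  fix c
  assume "c \<in> {c. Suc c \<in> addable lam \<mu>}"
  then have a: "Suc c \<in> addable lam \<mu>" by simp
  then have "Suc c \<le> length lam" using addable_subset[OF lam, of \<mu>] by auto
  with a len show "c \<in> {c. c < d \<and> (c = 0 \<or> Suc (particle d \<mu> c) \<noteq> particle d \<mu> (c - 1))
                     \<and> particle d \<mu> c < particle d (part lam) c}"
    by (cases c) (auto simp: addable_def particle_def)
qed

lemma sum_Pow_addable_columns:
  "(\<Sum>S\<in>Pow {c. Suc c \<in> addable lam \<mu>}. det (dm_mat A (particle_val A lam d) d (bump (particle d \<mu>) S)))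
     = (\<Sum>S\<in>Pow (addable lam \<mu>). shape_det A lam d (bump \<mu> S))"
proof (rule sum.reindex_bij_witness[where j = "image Suc" and i = "\<lambda>S. {c. Suc c \<in> S}"])
  fix S assume "S \<in> Pow {c. Suc c \<in> addable lam \<mu>}"
  then show "{c. Suc c \<in> Suc ` S} = S" "Suc ` S \<in> Pow (addable lam \<mu>)" by auto
  show "shape_det A lam d (bump \<mu> (Suc ` S))
          = det (dm_mat A (particle_val A lam d) d (bump (particle d \<mu>) S))"
    unfolding shape_det_def
    by (rule arg_cong[where f = det], rule dm_mat_cong) (auto simp: particle_def bump_def)
next
  fix S assume S: "S \<in> Pow (addable lam \<mu>)"
  then have "0 \<notin> S" by (auto simp: addable_def)
  then show "Suc ` {c. Suc c \<in> S} = S" by (auto simp: image_iff) (metis not0_implies_Suc)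
  show "{c. Suc c \<in> S} \<in> Pow {c. Suc c \<in> addable lam \<mu>}" using S by auto
qed

lemma shape_det_rec:
  assumes v: "subshape lam \<mu>"
  shows "(\<Sum>S\<in>{S. S \<subseteq> addable lam \<mu> \<and> S \<noteq> {}}. shape_det A lam d (bump \<mu> S))
           = (shape_ratio A lam d \<mu> - 1) * shape_det A lam d \<mu>"
proof -
  let ?W = "\<Prod>r<d. particle_val A lam d r" and ?SS = "{S. S \<subseteq> addable lam \<mu> \<and> S \<noteq> {}}"
  have "?W * (\<Sum>S\<in>Pow {c. c < d \<and> (c = 0 \<or> Suc (particle d \<mu> c) \<noteq> particle d \<mu> (c - 1))
                             \<and> particle d \<mu> c < particle d (part lam) c}.
                det (dm_mat A (particle_val A lam d) d (bump (particle d \<mu>) S)))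
          = (\<Prod>c<d. A (particle d \<mu> c)) * det (dm_mat A (particle_val A lam d) d (particle d \<mu>))"
    by (rule det_dm_mat_rec)
      (use particle_subshape[OF v] A_particle_nonzero[OF v] particle_part_range[OF lam]
         particle_part_descending[OF lam] particle_val_nonzero in \<open>auto simp: particle_val_def\<close>)
  then have "?W * (\<Sum>S\<in>Pow (addable lam \<mu>). shape_det A lam d (bump \<mu> S))
               = (\<Prod>c<d. A (particle d \<mu> c)) * shape_det A lam d \<mu>"
    unfolding addable_columns_eq[OF v] sum_Pow_addable_columns shape_det_def .
  moreover have "Pow (addable lam \<mu>) = insert {} ?SS" by auto
  moreover have "finite ?SS" using finite_addable[OF lam] by simp
  moreover have "bump \<mu> {} = \<mu>" by (simp add: bump_def fun_eq_iff)
  moreover have "?W \<noteq> 0" using particle_val_nonzero by (simp add: prod_zero_iff)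
  ultimately show ?thesis by (simp add: shape_ratio_eq field_simps)
qed

lemma shape_det_if_skew_cells_empty:
  assumes v: "subshape lam \<mu>" and "skew_cells lam \<mu> = {}"
  shows "shape_det A lam d \<mu> = shape_det A lam d (part lam)"
proof -
  have "\<mu> i = part lam i" for i
  proof (rule antisym)
    show "\<mu> i \<le> part lam i" using v by (simp add: subshape_def)
    show "part lam i \<le> \<mu> i"
    proof (rule ccontr)
      assume "\<not> part lam i \<le> \<mu> i"
      then have "(i, part lam i) \<in> skew_cells lam \<mu>"
        by (auto simp: skew_cells_iff Defs.part_def split: if_splits)
      with assms(2) show False by simp
    qed
  qed
  then have "\<mu> = part lam" by (simp add: fun_eq_iff)
  then show ?thesis by simp
qed

lemma skew_sum_mult_shape_det:
  assumes "subshape lam \<mu>" and "all_steps lam (\<lambda>\<nu>. shape_ratio A lam d \<nu> \<noteq> 1) \<mu>"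
  shows "skew_sum lam (step_weight A lam d) \<mu> * shape_det A lam d (part lam) = shape_det A lam d \<mu>"
  using assms
proof (induction \<mu> rule: measure_induct_rule[where f = "\<lambda>\<mu>. card (skew_cells lam \<mu>)"])
  case (less \<mu>)
  note v = less.prems(1) and steps = less.prems(2)
  show ?case
  proof (cases "skew_cells lam \<mu> = {}")
    case True
    then show ?thesis by (simp add: skew_sum_empty shape_det_if_skew_cells_empty[OF v])
  next
    case False
    let ?SS = "{S. S \<subseteq> addable lam \<mu> \<and> S \<noteq> {}}"
    have IH: "skew_sum lam (step_weight A lam d) (bump \<mu> S) * shape_det A lam d (part lam)
                = shape_det A lam d (bump \<mu> S)" if "S \<in> ?SS" for S
      using that less.IH[OF card_skew_cells_bump subshape_bump[OF v] all_steps_bump[OF v _ _ steps]]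
      by blast
    have "skew_sum lam (step_weight A lam d) \<mu> * shape_det A lam d (part lam)
        = step_weight A lam d \<mu> * (\<Sum>S\<in>?SS. shape_det A lam d (bump \<mu> S))"
      by (simp add: skew_sum_rec[OF lam v False] sum_distrib_right mult.assoc IH)
    also have "\<dots> = step_weight A lam d \<mu> * ((shape_ratio A lam d \<mu> - 1) * shape_det A lam d \<mu>)"
      by (simp add: shape_det_rec[OF v])
    also have "\<dots> = shape_det A lam d \<mu>"
      using all_steps_self[OF lam v False steps] by (simp add: step_weight_def)
    finally show ?thesis .
  qed
qed

lemma shape_det_empty:
  "shape_det A lam d (\<lambda>_. 0)
     = (\<Prod>r<d. \<Prod>r'\<in>{r<..<d}. particle_val A lam d r' - particle_val A lam d r)"
proof -
  have "dm_mat A (particle_val A lam d) d (particle d (\<lambda>_. 0))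
          = mat d d (\<lambda>(r,c). \<Prod>t\<in>{1..<d-c}. A t - particle_val A lam d r)"
  proof (rule eq_matI)
    fix r c assume "r < dim_row (mat d d (\<lambda>(r,c). \<Prod>t\<in>{1..<d-c}. A t - particle_val A lam d r))"
      and "c < dim_col (mat d d (\<lambda>(r,c). \<Prod>t\<in>{1..<d-c}. A t - particle_val A lam d r))"
    then have r: "r < d" and c: "c < d" by auto
    have "d - 1 - c = (d - c) - 1" by simp
    then show "dm_mat A (particle_val A lam d) d (particle d (\<lambda>_. 0)) $$ (r, c)
                 = mat d d (\<lambda>(r,c). \<Prod>t\<in>{1..<d-c}. A t - particle_val A lam d r) $$ (r, c)"
      using power_mult_ratio_prod[OF particle_val_nonzero[OF r], of "d - c" A] r c
      by (simp add: dm_mat_def dm_entry_def particle_def)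
  qed (simp_all add: dm_mat_def)
  then show ?thesis
    using det_mat_prod_vandermonde[of d A "particle_val A lam d"]
      prod_pairs_swap[of "\<lambda>r r'. particle_val A lam d r' - particle_val A lam d r" d]
    by (simp add: shape_det_def)
qed

lemma prod_below_particle:
  assumes r: "r < d"
  shows "(\<Prod>t\<in>{1..<particle d (part lam) r}. A t - particle_val A lam d r)
       = (\<Prod>r'\<in>{r<..<d}. particle_val A lam d r' - particle_val A lam d r)
         * (\<Prod>j=1..part lam (Suc r). A (hole lam d j) - particle_val A lam d r)"
proof -
  let ?a = "particle_val A lam d r"
  have disj: "particle d (part lam) ` {r<..<d} \<inter> hole lam d ` {1..part lam (Suc r)} = {}"
    using hole_neq_particle[OF lam len] r by fastforce
  have "(\<Prod>t\<in>{1..<particle d (part lam) r}. A t - ?a)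
          = (\<Prod>t\<in>particle d (part lam) ` {r<..<d}. A t - ?a)
            * (\<Prod>t\<in>hole lam d ` {1..part lam (Suc r)}. A t - ?a)"
    unfolding below_particle_eq[OF lam len r] by (rule prod.union_disjoint) (use disj in auto)
  also have "(\<Prod>t\<in>particle d (part lam) ` {r<..<d}. A t - ?a)
               = (\<Prod>r'\<in>{r<..<d}. particle_val A lam d r' - ?a)"
    by (simp add: prod.reindex[OF inj_on_particle_part[OF lam]] particle_val_def)
  also have "(\<Prod>t\<in>hole lam d ` {1..part lam (Suc r)}. A t - ?a)
               = (\<Prod>j=1..part lam (Suc r). A (hole lam d j) - ?a)"
    by (simp add: prod.reindex[OF strict_mono_imp_inj_on[OF hole_strict_mono[OF len]]])
  finally show ?thesis .
qed

lemma shape_det_full: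
  "shape_det A lam d (part lam)
     = (\<Prod>r<d. \<Prod>r'\<in>{r<..<d}. particle_val A lam d r' - particle_val A lam d r)
       * (\<Prod>r<d. (\<Prod>j=1..part lam (Suc r). A (hole lam d j) - particle_val A lam d r)
                   / particle_val A lam d r ^ part lam (Suc r))"
proof -
  have "shape_det A lam d (part lam) = (\<Prod>r<d. dm_entry A (particle_val A lam d) d r r (particle d (part lam) r))"
    unfolding shape_det_def
    by (rule det_dm_mat_diag)
      (use particle_val_nonzero particle_part_range[OF lam] particle_part_descending[OF lam]
        in \<open>auto simp: particle_val_def\<close>)
  also have "\<dots> = (\<Prod>r<d. (\<Prod>t\<in>{1..<particle d (part lam) r}. A t - particle_val A lam d r)
                          / particle_val A lam d r ^ part lam (Suc r))"
  proof (intro prod.cong refl)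
    fix r assume "r \<in> {..<d}"
    then have r: "r < d" by simp
    let ?a = "particle_val A lam d r"
    have exponent: "particle d (part lam) r - 1 = part lam (Suc r) + (d - 1 - r)"
      using r by (simp add: particle_def)
    have "?a ^ (particle d (part lam) r - 1) * ratio_prod A ?a (particle d (part lam) r)
            = (\<Prod>t\<in>{1..<particle d (part lam) r}. A t - ?a)"
      by (rule power_mult_ratio_prod[OF particle_val_nonzero[OF r]])
    then have "?a ^ part lam (Suc r) * dm_entry A (particle_val A lam d) d r r (particle d (part lam) r)
                 = (\<Prod>t\<in>{1..<particle d (part lam) r}. A t - ?a)"
      unfolding exponent by (simp add: dm_entry_def power_add mult.assoc)
    then show "dm_entry A (particle_val A lam d) d r r (particle d (part lam) r)
                 = (\<Prod>t\<in>{1..<particle d (part lam) r}. A t - ?a) / ?a ^ part lam (Suc r)"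
      using particle_val_nonzero[OF r] by (simp add: field_simps)
  qed
  also have "\<dots> = (\<Prod>r<d. (\<Prod>r'\<in>{r<..<d}. particle_val A lam d r' - particle_val A lam d r)
               * ((\<Prod>j=1..part lam (Suc r). A (hole lam d j) - particle_val A lam d r)
                  / particle_val A lam d r ^ part lam (Suc r)))"
    by (intro prod.cong refl) (use prod_below_particle in simp)
  finally show ?thesis by (simp only: prod.distrib)
qed
end

section \<open>The identity for injective \<open>A\<close>\<close>

lemma prod_young:
  assumes "is_partition lam" "length lam \<le> d"
  shows "(\<Prod>(i, j)\<in>young lam. g i j) = (\<Prod>i=1..d. \<Prod>j=1..part lam i. g i j)"
  unfolding young_Sigma_upto[OF assms] by (rule prod.Sigma[symmetric]) auto

context
  fixes A :: "nat \<Rightarrow> 'a::field" and lam :: "nat list" and d :: nat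
  assumes lam: "is_partition lam" and len: "length lam \<le> d"
    and A_inj: "inj_on A {1..part lam 1 + d}"
begin

lemma particle_val_neq:
  assumes "r < r'" "r' < d"
  shows "particle_val A lam d r' \<noteq> particle_val A lam d r"
proof
  assume "particle_val A lam d r' = particle_val A lam d r"
  moreover have "particle d (part lam) r' \<in> {1..part lam 1 + d}" "particle d (part lam) r \<in> {1..part lam 1 + d}"
    using particle_part_range[OF lam, of r' d] particle_part_range[OF lam, of r d] assms by auto
  ultimately have "particle d (part lam) r' = particle d (part lam) r"
    using A_inj by (simp add: particle_val_def inj_on_eq_iff)
  then show False using particle_part_less[OF lam assms] by simp
qed

lemma hole_val_neq_particle_val:
  assumes j: "1 \<le> j" "j \<le> part lam (Suc r)" and r: "r < d"
  shows "A (hole lam d j) \<noteq> particle_val A lam d r"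
proof
  assume "A (hole lam d j) = particle_val A lam d r"
  moreover have "hole lam d j \<in> {1..part lam 1 + d}" "particle d (part lam) r \<in> {1..part lam 1 + d}"
    using hole_less_particle[OF lam len j r] particle_part_range[OF lam r] by auto
  ultimately have "hole lam d j = particle d (part lam) r"
    using A_inj by (simp add: particle_val_def inj_on_eq_iff)
  then show False using hole_neq_particle[OF lam len j(1) r] by simp
qed

text \<open>The recursion gives the sum over \<open>SIT(\<lambda>)\<close> as the ratio of the Vandermonde determinant
  \<open>shape_det A lam d (\<lambda>_. 0)\<close> and the triangular determinant \<open>shape_det A lam d (part lam)\<close>;
  their common Vandermonde factor cancels.\<close>

lemma sum_sit_step_weight_inj:
  assumes A_nonzero: "\<And>t. 1 \<le> t \<Longrightarrow> t \<le> part lam 1 + d \<Longrightarrow> A t \<noteq> 0"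
    and steps: "\<forall>T\<in>sit lam. \<forall>k\<in>{1..sit_max lam T}. shape_ratio A lam d (nu lam T k) \<noteq> 1"
  shows "(\<Sum>T\<in>sit lam. \<Prod>k=1..sit_max lam T. step_weight A lam d (nu lam T k))
       = (\<Prod>i=1..d. A (part lam i + d - i + 1) ^ part lam i)
         * (\<Prod>(i, j)\<in>young lam. 1 / (A (hole lam d j) - A (part lam i + d - i + 1)))"
proof -
  let ?a = "particle_val A lam d"
  define V where "V = (\<Prod>r<d. \<Prod>r'\<in>{r<..<d}. ?a r' - ?a r)"
  define H where "H r = (\<Prod>j=1..part lam (Suc r). A (hole lam d j) - ?a r)" for r
  let ?S = "\<Sum>T\<in>sit lam. \<Prod>k=1..sit_max lam T. step_weight A lam d (nu lam T k)"
  let ?P = "\<Prod>r<d. H r / ?a r ^ part lam (Suc r)"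
  have "?S * shape_det A lam d (part lam) = shape_det A lam d (\<lambda>_. 0)"
    using skew_sum_mult_shape_det[where A = A, OF lam len A_nonzero subshape_zero] steps
    by (simp add: all_steps_def skew_sum_def sit_skew_zero sit_skew_max_zero)
  moreover have "shape_det A lam d (\<lambda>_. 0) = V"
    unfolding V_def by (rule shape_det_empty[where A = A, OF lam len A_nonzero])
  moreover have "shape_det A lam d (part lam) = V * ?P"
    unfolding V_def H_def by (rule shape_det_full[where A = A, OF lam len A_nonzero])
  moreover have "V \<noteq> 0" using particle_val_neq by (simp add: V_def prod_zero_iff)
  moreover have "?a r \<noteq> 0" if "r < d" for r
    using particle_val_nonzero[where A = A, OF lam len A_nonzero that] .
  moreover have "H r \<noteq> 0" if "r < d" for r
    using hole_val_neq_particle_val[OF _ _ that] by (simp add: H_def prod_zero_iff)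
  ultimately have "?S = 1 / ?P"
    by (simp add: field_simps prod_zero_iff)
  also have "\<dots> = (\<Prod>r<d. ?a r ^ part lam (Suc r) / H r)"
    by (simp add: prod_dividef flip: prod_inversef)
  also have "\<dots> = (\<Prod>r<d. ?a r ^ part lam (Suc r)) * (\<Prod>r<d. \<Prod>j=1..part lam (Suc r). 1 / (A (hole lam d j) - ?a r))"
    by (simp add: H_def prod.distrib prod_dividef divide_inverse flip: prod_inversef)
  also have "\<dots> = (\<Prod>i=1..d. A (part lam i + d - i + 1) ^ part lam i)
         * (\<Prod>(i, j)\<in>young lam. 1 / (A (hole lam d j) - A (part lam i + d - i + 1)))"
    unfolding prod_young[OF lam len] particle_val_def
      prod_particle[of "\<lambda>i x. A x ^ part lam i"]
      prod_particle[of "\<lambda>i x. \<Prod>j=1..part lam i. 1 / (A (hole lam d j) - A x)"] ..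
  finally show ?thesis .
qed

end

section \<open>Removing the injectivity hypothesis\<close>

definition perturb :: "(nat \<Rightarrow> 'a::field) \<Rightarrow> 'a \<Rightarrow> nat \<Rightarrow> 'a" where
  "perturb A x t = A t + x * of_nat t"

lemma perturb_0 [simp]: "perturb A 0 = A"
  by (simp add: perturb_def fun_eq_iff)

lemma rational_at_0_perturb: "rational_at_0 (\<lambda>x. perturb A x t)"
  unfolding perturb_def by (rule rational_at_0_affine)

lemma finite_roots_affine:
  fixes c e :: "'a::field"
  assumes "e \<noteq> 0"
  shows "finite {x. c + x * e = 0}"
  using poly_roots_finite[of "[:c, e:]"] assms by (simp add: algebra_simps)

lemma finite_perturbation_exceptions:
  fixes A :: "nat \<Rightarrow> 'a::field_char_0"
  shows "finite {x. \<not> (inj_on (perturb A x) {1..N} \<and> (\<forall>t. 1 \<le> t \<longrightarrow> t \<le> N \<longrightarrow> perturb A x t \<noteq> 0))}"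
proof (rule finite_subset)
  show "{x. \<not> (inj_on (perturb A x) {1..N} \<and> (\<forall>t. 1 \<le> t \<longrightarrow> t \<le> N \<longrightarrow> perturb A x t \<noteq> 0))}
        \<subseteq> (\<Union>t\<in>{1..N}. {x. A t + x * of_nat t = 0})
          \<union> (\<Union>s\<in>{1..N}. \<Union>t\<in>{1..N} - {s}. {x. (A s - A t) + x * (of_nat s - of_nat t) = 0})"
    by (auto simp: inj_on_def perturb_def algebra_simps)
  show "finite ((\<Union>t\<in>{1..N}. {x. A t + x * of_nat t = 0})
          \<union> (\<Union>s\<in>{1..N}. \<Union>t\<in>{1..N} - {s}. {x. (A s - A t) + x * (of_nat s - of_nat t) = 0}))"
    by (intro finite_UnI finite_UN_I finite_Diff finite_atLeastAtMost finite_roots_affine) auto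
qed

lemma rational_at_0_shape_ratio:
  assumes "\<forall>i\<in>{1..d}. A (part lam i + d - i + 1) \<noteq> 0"
  shows "rational_at_0 (\<lambda>x. shape_ratio (perturb A x) lam d \<nu> - 1)"
  unfolding shape_ratio_def
  by (intro rational_at_0_diff rational_at_0_prod rational_at_0_divide rational_at_0_perturb
      rational_at_0_const) (use assms in simp)

lemma rational_at_0_sum_sit_step_weight:
  assumes "\<forall>i\<in>{1..d}. A (part lam i + d - i + 1) \<noteq> 0"
    and "\<forall>T\<in>sit lam. \<forall>k\<in>{1..sit_max lam T}. shape_ratio A lam d (nu lam T k) \<noteq> 1"
  shows "rational_at_0
           (\<lambda>x. \<Sum>T\<in>sit lam. \<Prod>k=1..sit_max lam T. step_weight (perturb A x) lam d (nu lam T k))"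
  unfolding step_weight_def
  by (intro rational_at_0_sum rational_at_0_prod rational_at_0_inverse rational_at_0_shape_ratio
      assms(1)) (use assms(2) in simp)

lemma rational_at_0_product_formula:
  assumes "\<forall>(i, j)\<in>young lam. A (hole lam d j) \<noteq> A (part lam i + d - i + 1)"
  shows "rational_at_0 (\<lambda>x. (\<Prod>i=1..d. perturb A x (part lam i + d - i + 1) ^ part lam i)
           * (\<Prod>(i, j)\<in>young lam. 1 / (perturb A x (hole lam d j) - perturb A x (part lam i + d - i + 1))))"
  unfolding case_prod_beta
  by (intro rational_at_0_mult rational_at_0_prod rational_at_0_power rational_at_0_inverse
      rational_at_0_diff rational_at_0_perturb) (use assms in \<open>auto simp: young_iff\<close>)

lemma sum_sit_step_weight:
  fixes A :: "nat \<Rightarrow> 'a::field_char_0"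
  assumes lam: "is_partition lam" and len: "length lam \<le> d"
    and A_nonzero: "\<forall>i\<in>{1..d}. A (part lam i + d - i + 1) \<noteq> 0"
    and hole_neq: "\<forall>(i, j)\<in>young lam. A (hole lam d j) \<noteq> A (part lam i + d - i + 1)"
    and steps: "\<forall>T\<in>sit lam. \<forall>k\<in>{1..sit_max lam T}. shape_ratio A lam d (nu lam T k) \<noteq> 1"
  shows "(\<Sum>T\<in>sit lam. \<Prod>k=1..sit_max lam T. step_weight A lam d (nu lam T k))
       = (\<Prod>i=1..d. A (part lam i + d - i + 1) ^ part lam i)
         * (\<Prod>(i, j)\<in>young lam. 1 / (A (hole lam d j) - A (part lam i + d - i + 1)))"
proof -
  define L where "L x = (\<Sum>T\<in>sit lam. \<Prod>k=1..sit_max lam T. step_weight (perturb A x) lam d (nu lam T k))"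
    for x
  define R where "R x = (\<Prod>i=1..d. perturb A x (part lam i + d - i + 1) ^ part lam i)
    * (\<Prod>(i, j)\<in>young lam. 1 / (perturb A x (hole lam d j) - perturb A x (part lam i + d - i + 1)))"
    for x
  define E where "E = {x. \<not> (inj_on (perturb A x) {1..part lam 1 + d}
      \<and> (\<forall>t. 1 \<le> t \<longrightarrow> t \<le> part lam 1 + d \<longrightarrow> perturb A x t \<noteq> 0))}
    \<union> (\<Union>T\<in>sit lam. \<Union>k\<in>{1..sit_max lam T}. {x. shape_ratio (perturb A x) lam d (nu lam T k) - 1 = 0})"
  have "finite {x. shape_ratio (perturb A x) lam d (nu lam T k) - 1 = 0}"
    if "T \<in> sit lam" "k \<in> {1..sit_max lam T}" for T k
    using rational_at_0_finite_zeros[OF rational_at_0_shape_ratio[OF A_nonzero]] steps that by simp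
  then have "finite E"
    unfolding E_def using finite_perturbation_exceptions finite_sit by blast
  have "L x = R x" if "x \<notin> E" for x
  proof -
    have "inj_on (perturb A x) {1..part lam 1 + d}"
      and "\<And>t. 1 \<le> t \<Longrightarrow> t \<le> part lam 1 + d \<Longrightarrow> perturb A x t \<noteq> 0"
      and "\<forall>T\<in>sit lam. \<forall>k\<in>{1..sit_max lam T}. shape_ratio (perturb A x) lam d (nu lam T k) \<noteq> 1"
      using that by (simp_all add: E_def)
    then show ?thesis
      unfolding L_def R_def by (rule sum_sit_step_weight_inj[OF lam len])
  qed
  then have "{x. L x \<noteq> R x} \<subseteq> E" by blast
  then have "finite {x. L x \<noteq> R x}" using \<open>finite E\<close> by (rule finite_subset)
  moreover have "rational_at_0 L"
    unfolding L_def using A_nonzero steps by (rule rational_at_0_sum_sit_step_weight)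
  moreover have "rational_at_0 R"
    unfolding R_def using hole_neq by (rule rational_at_0_product_formula)
  ultimately have "L 0 = R 0" using rational_at_0_cofinite_eq by blast
  then show ?thesis by (simp add: L_def R_def)
qed

theorem theorem4p2:
  fixes d n :: nat and lam :: "nat list" and \<beta> :: "'a::field_char_0" and y :: "nat \<Rightarrow> 'a"
  assumes "d \<ge> 1" and "is_partition lam" and "sum_list lam = n" and "length lam \<le> d"
    and "\<beta> \<noteq> 0"
    and "\<forall>i\<in>{1..d}. 1 + \<beta> * y (part lam i + d - i + 1) \<noteq> 0"
    and "\<forall>(i, j)\<in>young lam. y (d + j - conj_part lam j) \<noteq> y (part lam i + d - i + 1)"
    and "\<forall>T\<in>sit lam. \<forall>k\<in>{1..sit_max lam T}.
           (\<Prod>i=1..d. (1 + \<beta> * y (nu lam T k i + d - i + 1)) / (1 + \<beta> * y (part lam i + d - i + 1))) - 1 \<noteq> 0"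
  shows "(\<Sum>T\<in>sit lam. \<Prod>k=1..sit_max lam T.
            1 / ((\<Prod>i=1..d. (1 + \<beta> * y (nu lam T k i + d - i + 1)) / (1 + \<beta> * y (part lam i + d - i + 1))) - 1))
         = 1 / \<beta> ^ n * (\<Prod>i=1..d. (1 + \<beta> * y (part lam i + d - i + 1)) ^ part lam i)
             * (\<Prod>(i, j)\<in>young lam. 1 / (y (d + j - conj_part lam j) - y (part lam i + d - i + 1)))"
proof -
  define A where "A t = 1 + \<beta> * y t" for t
  have "\<forall>(i, j)\<in>young lam. A (hole lam d j) \<noteq> A (part lam i + d - i + 1)"
    using assms(5,7) by (auto simp: A_def hole_def)
  then have "(\<Sum>T\<in>sit lam. \<Prod>k=1..sit_max lam T. step_weight A lam d (nu lam T k))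
      = (\<Prod>i=1..d. A (part lam i + d - i + 1) ^ part lam i)
        * (\<Prod>(i, j)\<in>young lam. 1 / (A (hole lam d j) - A (part lam i + d - i + 1)))"
    by (intro sum_sit_step_weight[OF assms(2,4)]) (use assms(6,8) in \<open>simp_all add: A_def shape_ratio_def\<close>)
  also have "(\<Prod>(i, j)\<in>young lam. 1 / (A (hole lam d j) - A (part lam i + d - i + 1)))
      = (\<Prod>(i, j)\<in>young lam. 1 / \<beta> * (1 / (y (d + j - conj_part lam j) - y (part lam i + d - i + 1))))"
    using assms(5) by (intro prod.cong refl) (auto simp: A_def hole_def algebra_simps)
  also have "\<dots> = (\<Prod>c\<in>young lam. 1 / \<beta>)
      * (\<Prod>(i, j)\<in>young lam. 1 / (y (d + j - conj_part lam j) - y (part lam i + d - i + 1)))"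
    unfolding case_prod_unfold by (rule prod.distrib)
  also have "(\<Prod>c\<in>young lam. 1 / \<beta>) = 1 / \<beta> ^ n"
    using card_young[of lam] assms(3) by (simp add: power_one_over)
  finally show ?thesis by (simp add: step_weight_def shape_ratio_def A_def ac_simps)
qed

end
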